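(* Let $\varphi\colon\Gamma\to K$ be a surjective homomorphism of discrete groups with kernel $H$. Then the following are equivalent: (1) for every normed $\mathbb{R}[\Gamma]$-module $V$, the inflation map $H^\bullet_b(\varphi;\mathrm{I}_V)\colon H^\bullet_b(K;V^H)\to H^\bullet_b(\Gamma;V)$ is an isometric isomorphism in all degrees; (2) for every Banach $\Gamma$-module $V$, the inflation map $H^1_b(\varphi;\mathrm{I}_V)\colon H^1_b(K;V^H)\to H^1_b(\Gamma;V)$ is an isomorphism; (3) $H$ is finite.
   Context: A normed $\mathbb{R}[\Gamma]$-module is a normed real vector space with an action of $\Gamma$ by $\mathbb{R}$-linear isometries; a Banach $\Gamma$-module is a complete one. The bounded cohomology $H^\bullet_b(\Gamma;V)$ is the cohomology of the complex $C^\bullet_b(\Gamma;V)^\Gamma$ of $\Gamma$-invariant bounded functions $\Gamma^{\bullet+1}\to V$ (with $\Gamma$ acting by $(g\cdot f)(g_0,\dots,g_\bullet)=g f(g^{-1}g_0,\dots,g^{-1}g_\bullet)$ and the usual homogeneous coboundary), endowed with the seminorm induced by the $\ell^\infty$-norm; "isometric" means preserving this seminorm. For $H=\ker\varphi$, the $H$-fixed subspace $V^H$ is a normed $\mathbb{R}[K]$-module, and the inflation map $H^\bullet_b(\varphi;\mathrm{I}_V)$ is induced by restriction along $\varphi$ together with the inclusion $\mathrm{I}_V\colon V^H\to V$. *)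

theory Defs
  imports Complex_Main "HOL-Algebra.Coset"
begin

text \<open>The group is a HOL-Algebra group with carrier; modules carry explicit operations so
  that one can quantify over modules inside a formula.\<close>

record ('g, 'v) gmod =
  vcarrier :: "'v set"
  vzero    :: 'v
  vadd     :: "'v \<Rightarrow> 'v \<Rightarrow> 'v"
  vscale   :: "real \<Rightarrow> 'v \<Rightarrow> 'v"
  vnorm    :: "'v \<Rightarrow> real"
  act      :: "'g \<Rightarrow> 'v \<Rightarrow> 'v"

definition vsub :: "('g, 'v) gmod \<Rightarrow> 'v \<Rightarrow> 'v \<Rightarrow> 'v" where
  "vsub V u w = vadd V u (vscale V (-1) w)"

definition normed_space :: "('g, 'v) gmod \<Rightarrow> bool" where
  "normed_space V \<longleftrightarrow>
     vzero V \<in> vcarrier V \<and>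
     (\<forall>u\<in>vcarrier V. \<forall>w\<in>vcarrier V. vadd V u w \<in> vcarrier V) \<and>
     (\<forall>a. \<forall>u\<in>vcarrier V. vscale V a u \<in> vcarrier V) \<and>
     (\<forall>u\<in>vcarrier V. \<forall>w\<in>vcarrier V. \<forall>x\<in>vcarrier V.
        vadd V (vadd V u w) x = vadd V u (vadd V w x)) \<and>
     (\<forall>u\<in>vcarrier V. \<forall>w\<in>vcarrier V. vadd V u w = vadd V w u) \<and>
     (\<forall>u\<in>vcarrier V. vadd V u (vzero V) = u) \<and>
     (\<forall>u\<in>vcarrier V. vadd V u (vscale V (-1) u) = vzero V) \<and>
     (\<forall>a b. \<forall>u\<in>vcarrier V. vscale V a (vscale V b u) = vscale V (a * b) u) \<and>
     (\<forall>u\<in>vcarrier V. vscale V 1 u = u) \<and>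
     (\<forall>a b. \<forall>u\<in>vcarrier V. vscale V (a + b) u = vadd V (vscale V a u) (vscale V b u)) \<and>
     (\<forall>a. \<forall>u\<in>vcarrier V. \<forall>w\<in>vcarrier V.
        vscale V a (vadd V u w) = vadd V (vscale V a u) (vscale V a w)) \<and>
     (\<forall>u\<in>vcarrier V. 0 \<le> vnorm V u) \<and>
     (\<forall>u\<in>vcarrier V. vnorm V u = 0 \<longleftrightarrow> u = vzero V) \<and>
     (\<forall>a. \<forall>u\<in>vcarrier V. vnorm V (vscale V a u) = \<bar>a\<bar> * vnorm V u) \<and>
     (\<forall>u\<in>vcarrier V. \<forall>w\<in>vcarrier V. vnorm V (vadd V u w) \<le> vnorm V u + vnorm V w)"

definition complete_vs :: "('g, 'v) gmod \<Rightarrow> bool" where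
  "complete_vs V \<longleftrightarrow>
     (\<forall>X :: nat \<Rightarrow> 'v. (\<forall>i. X i \<in> vcarrier V) \<and>
        (\<forall>e>0. \<exists>N. \<forall>m\<ge>N. \<forall>n\<ge>N. vnorm V (vsub V (X m) (X n)) < e)
      \<longrightarrow> (\<exists>L\<in>vcarrier V. (\<lambda>i. vnorm V (vsub V (X i) L)) \<longlonglongrightarrow> 0))"

definition normed_gmod :: "('g, 'b) monoid_scheme \<Rightarrow> ('g, 'v) gmod \<Rightarrow> bool" where
  "normed_gmod G V \<longleftrightarrow> normed_space V \<and>
     (\<forall>g\<in>carrier G. \<forall>u\<in>vcarrier V. act V g u \<in> vcarrier V \<and> vnorm V (act V g u) = vnorm V u) \<and>
     (\<forall>g\<in>carrier G. \<forall>u\<in>vcarrier V. \<forall>w\<in>vcarrier V.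
        act V g (vadd V u w) = vadd V (act V g u) (act V g w)) \<and>
     (\<forall>g\<in>carrier G. \<forall>a. \<forall>u\<in>vcarrier V. act V g (vscale V a u) = vscale V a (act V g u)) \<and>
     (\<forall>u\<in>vcarrier V. act V \<one>\<^bsub>G\<^esub> u = u) \<and>
     (\<forall>g\<in>carrier G. \<forall>h\<in>carrier G. \<forall>u\<in>vcarrier V.
        act V (g \<otimes>\<^bsub>G\<^esub> h) u = act V g (act V h u))"

definition banach_gmod :: "('g, 'b) monoid_scheme \<Rightarrow> ('g, 'v) gmod \<Rightarrow> bool" where
  "banach_gmod G V \<longleftrightarrow> normed_gmod G V \<and> complete_vs V"

definition tuples :: "('g, 'b) monoid_scheme \<Rightarrow> nat \<Rightarrow> 'g list set" where
  "tuples G n = {xs. length xs = Suc n \<and> set xs \<subseteq> carrier G}"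

fun vsum :: "('g, 'v) gmod \<Rightarrow> 'v list \<Rightarrow> 'v" where
  "vsum V [] = vzero V"
| "vsum V (v # vs) = vadd V v (vsum V vs)"

definition cobound :: "('g, 'v) gmod \<Rightarrow> ('g list \<Rightarrow> 'v) \<Rightarrow> 'g list \<Rightarrow> 'v" where
  "cobound V f xs = vsum V (map (\<lambda>i. vscale V ((-1) ^ i) (f (take i xs @ drop (Suc i) xs)))
                               [0..<length xs])"

text \<open>G-invariant bounded n-cochains: \<open>g f(g^-1 x) = f(x)\<close>, i.e. \<open>f(g x) = g f(x)\<close>.\<close>
definition Cb :: "('g, 'b) monoid_scheme \<Rightarrow> ('g, 'v) gmod \<Rightarrow> nat \<Rightarrow> ('g list \<Rightarrow> 'v) set" where
  "Cb G V n = {f. (\<forall>xs\<in>tuples G n. f xs \<in> vcarrier V) \<and>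
                  (\<exists>C. \<forall>xs\<in>tuples G n. vnorm V (f xs) \<le> C) \<and>
                  (\<forall>g\<in>carrier G. \<forall>xs\<in>tuples G n. f (map ((\<otimes>\<^bsub>G\<^esub>) g) xs) = act V g (f xs))}"

definition Zb :: "('g, 'b) monoid_scheme \<Rightarrow> ('g, 'v) gmod \<Rightarrow> nat \<Rightarrow> ('g list \<Rightarrow> 'v) set" where
  "Zb G V n = {f \<in> Cb G V n. \<forall>xs\<in>tuples G (Suc n). cobound V f xs = vzero V}"

definition is_cobdry :: "('g, 'b) monoid_scheme \<Rightarrow> ('g, 'v) gmod \<Rightarrow> nat \<Rightarrow> ('g list \<Rightarrow> 'v) \<Rightarrow> bool" where
  "is_cobdry G V n f \<longleftrightarrow>
     (case n of 0 \<Rightarrow> (\<forall>xs\<in>tuples G 0. f xs = vzero V)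
              | Suc m \<Rightarrow> (\<exists>b\<in>Cb G V m. \<forall>xs\<in>tuples G n. f xs = cobound V b xs))"

definition cohomologous :: "('g, 'b) monoid_scheme \<Rightarrow> ('g, 'v) gmod \<Rightarrow> nat \<Rightarrow> ('g list \<Rightarrow> 'v) \<Rightarrow> ('g list \<Rightarrow> 'v) \<Rightarrow> bool" where
  "cohomologous G V n f f' \<longleftrightarrow> is_cobdry G V n (\<lambda>xs. vsub V (f xs) (f' xs))"

definition supnorm :: "('g, 'b) monoid_scheme \<Rightarrow> ('g, 'v) gmod \<Rightarrow> nat \<Rightarrow> ('g list \<Rightarrow> 'v) \<Rightarrow> real" where
  "supnorm G V n f = (SUP xs\<in>tuples G n. vnorm V (f xs))"

definition hb_norm :: "('g, 'b) monoid_scheme \<Rightarrow> ('g, 'v) gmod \<Rightarrow> nat \<Rightarrow> ('g list \<Rightarrow> 'v) \<Rightarrow> real" where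
  "hb_norm G V n f = (INF f'\<in>{f' \<in> Cb G V n. cohomologous G V n f f'}. supnorm G V n f')"

text \<open>\<open>V^H\<close> for \<open>H = ker \<phi>\<close>, as a K-module: k acts as any preimage g of k.\<close>
definition fixmod :: "('g, 'b) monoid_scheme \<Rightarrow> ('k, 'c) monoid_scheme \<Rightarrow> ('g \<Rightarrow> 'k)
                       \<Rightarrow> ('g, 'v) gmod \<Rightarrow> ('k, 'v) gmod" where
  "fixmod G K \<phi> V =
     \<lparr> vcarrier = {u \<in> vcarrier V. \<forall>h\<in>kernel G K \<phi>. act V h u = u},
       vzero = vzero V, vadd = vadd V, vscale = vscale V, vnorm = vnorm V,
       act = (\<lambda>k u. act V (SOME g. g \<in> carrier G \<and> \<phi> g = k) u) \<rparr>"

text \<open>Inflation on cochains: restriction along \<phi> composed with the inclusion \<open>V^H \<rightarrow> V\<close>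
  (the inclusion is the identity on elements).\<close>
definition infl :: "('g \<Rightarrow> 'k) \<Rightarrow> ('k list \<Rightarrow> 'v) \<Rightarrow> 'g list \<Rightarrow> 'v" where
  "infl \<phi> f = (\<lambda>xs. f (map \<phi> xs))"

definition infl_bij :: "('g, 'b) monoid_scheme \<Rightarrow> ('k, 'c) monoid_scheme \<Rightarrow> ('g \<Rightarrow> 'k)
                         \<Rightarrow> ('g, 'v) gmod \<Rightarrow> nat \<Rightarrow> bool" where
  "infl_bij G K \<phi> V n \<longleftrightarrow>
     (\<forall>f\<in>Zb K (fixmod G K \<phi> V) n. is_cobdry G V n (infl \<phi> f) \<longrightarrow> is_cobdry K (fixmod G K \<phi> V) n f) \<and>
     (\<forall>f'\<in>Zb G V n. \<exists>f\<in>Zb K (fixmod G K \<phi> V) n. cohomologous G V n f' (infl \<phi> f))"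

definition infl_isometric_iso :: "('g, 'b) monoid_scheme \<Rightarrow> ('k, 'c) monoid_scheme \<Rightarrow> ('g \<Rightarrow> 'k)
                         \<Rightarrow> ('g, 'v) gmod \<Rightarrow> nat \<Rightarrow> bool" where
  "infl_isometric_iso G K \<phi> V n \<longleftrightarrow> infl_bij G K \<phi> V n \<and>
     (\<forall>f\<in>Zb K (fixmod G K \<phi> V) n. hb_norm G V n (infl \<phi> f) = hb_norm K (fixmod G K \<phi> V) n f)"

end

(* If H is finite, averaging a bounded \<Gamma>-cochain over all lifts of its arguments along \<phi>
   yields a bounded K-cochain with values in V^H. This averaging is a chain map, a left inverse
   of inflation, and does not increase the sup norm; an explicit chain homotopy (an alternating
   sum of partial averages) shows that inflation followed by averaging is homotopic to the
   identity. Hence inflation is bijective on bounded cohomology, and isometric because both maps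
   are norm non-increasing on cochains.

   If H is infinite, take V = l^1_0(\<Gamma>), the summable functions of total sum zero. It has no
   nonzero H-fixed vectors, so H^1_b(K;V^H) = 0, whereas the cocycle
   (g\<^sub>0, g\<^sub>1) \<mapsto> \<delta>\<^sub>g\<^sub>1 - \<delta>\<^sub>g\<^sub>0 is not a coboundary: a primitive
   would differ from g \<mapsto> \<delta>\<^sub>g by a \<Gamma>-invariant vector, which must vanish, but \<delta>\<^sub>g
   does not have sum zero. *)

theory Submission
  imports Defs "HOL-Algebra.FiniteProduct" "HOL-Analysis.Infinite_Sum"
begin

section \<open>Normed vector spaces with explicit operations\<close>

locale normed_vs =
  fixes V :: "('g, 'v) gmod"
  assumes normed_space: "normed_space V"
begin

abbreviation "C \<equiv> vcarrier V"
abbreviation "add \<equiv> vadd V"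
abbreviation "scl \<equiv> vscale V"
abbreviation "zero \<equiv> vzero V"
abbreviation "nrm \<equiv> vnorm V"
abbreviation "sub \<equiv> vsub V"
abbreviation "neg u \<equiv> vscale V (-1) u"

lemma zero_closed[simp]: "zero \<in> C"
  and add_closed[simp]: "u \<in> C \<Longrightarrow> w \<in> C \<Longrightarrow> add u w \<in> C"
  and scl_closed[simp]: "u \<in> C \<Longrightarrow> scl a u \<in> C"
  and add_assoc: "u \<in> C \<Longrightarrow> w \<in> C \<Longrightarrow> x \<in> C \<Longrightarrow> add (add u w) x = add u (add w x)"
  and add_commute: "u \<in> C \<Longrightarrow> w \<in> C \<Longrightarrow> add u w = add w u"
  and add_zero[simp]: "u \<in> C \<Longrightarrow> add u zero = u"
  and add_neg[simp]: "u \<in> C \<Longrightarrow> add u (neg u) = zero"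
  and scl_scl[simp]: "u \<in> C \<Longrightarrow> scl a (scl b u) = scl (a * b) u"
  and scl_one[simp]: "u \<in> C \<Longrightarrow> scl 1 u = u"
  and scl_add_left: "u \<in> C \<Longrightarrow> scl (a + b) u = add (scl a u) (scl b u)"
  and scl_add_right: "u \<in> C \<Longrightarrow> w \<in> C \<Longrightarrow> scl a (add u w) = add (scl a u) (scl a w)"
  and nrm_nonneg[simp]: "u \<in> C \<Longrightarrow> 0 \<le> nrm u"
  and nrm_eq_zero_iff: "u \<in> C \<Longrightarrow> nrm u = 0 \<longleftrightarrow> u = zero"
  and nrm_scl[simp]: "u \<in> C \<Longrightarrow> nrm (scl a u) = \<bar>a\<bar> * nrm u"
  and nrm_triangle: "u \<in> C \<Longrightarrow> w \<in> C \<Longrightarrow> nrm (add u w) \<le> nrm u + nrm w"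
  using normed_space unfolding normed_space_def by auto

lemma sub_closed[simp]: "u \<in> C \<Longrightarrow> w \<in> C \<Longrightarrow> sub u w \<in> C"
  by (simp add: vsub_def)

lemma add_left_commute: "u \<in> C \<Longrightarrow> w \<in> C \<Longrightarrow> x \<in> C \<Longrightarrow> add u (add w x) = add w (add u x)"
  by (metis add_assoc add_commute)

lemmas add_ac = add_assoc add_commute add_left_commute

lemma zero_add[simp]: "u \<in> C \<Longrightarrow> add zero u = u"
  by (metis add_zero add_commute zero_closed)

lemma neg_add[simp]: "u \<in> C \<Longrightarrow> add (neg u) u = zero"
  by (metis add_neg add_commute scl_closed)

lemma add_neg_cancel_left[simp]: "u \<in> C \<Longrightarrow> w \<in> C \<Longrightarrow> add u (add (neg u) w) = w"
  by (simp add: add_assoc[symmetric])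

lemma neg_add_cancel_left[simp]: "u \<in> C \<Longrightarrow> w \<in> C \<Longrightarrow> add (neg u) (add u w) = w"
  by (simp add: add_assoc[symmetric])

lemma add_left_cancel: "u \<in> C \<Longrightarrow> w \<in> C \<Longrightarrow> x \<in> C \<Longrightarrow> add u w = add u x \<Longrightarrow> w = x"
  by (metis neg_add_cancel_left)

lemma scl_zero[simp]: "u \<in> C \<Longrightarrow> scl 0 u = zero"
  using scl_add_left[of u 0 0] add_left_cancel[of "scl 0 u" "scl 0 u" zero] by simp

lemma scl_vzero[simp]: "scl a zero = zero"
  by (metis mult_zero_right scl_scl scl_zero zero_closed)

lemma nrm_zero[simp]: "nrm zero = 0"
  using nrm_eq_zero_iff by simp

lemma neg_add_distrib: "u \<in> C \<Longrightarrow> w \<in> C \<Longrightarrow> neg (add u w) = add (neg u) (neg w)"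
  by (simp add: scl_add_right)

lemma sub_self[simp]: "u \<in> C \<Longrightarrow> sub u u = zero"
  and sub_zero[simp]: "u \<in> C \<Longrightarrow> sub u zero = u"
  by (simp_all add: vsub_def)

lemma eq_sub_iff: "u \<in> C \<Longrightarrow> w \<in> C \<Longrightarrow> x \<in> C \<Longrightarrow> u = sub w x \<longleftrightarrow> add u x = w"
  unfolding vsub_def by (metis add_neg_cancel_left add_zero add_assoc neg_add add_commute scl_closed)

lemma sub_eq_zero_iff: "u \<in> C \<Longrightarrow> w \<in> C \<Longrightarrow> sub u w = zero \<longleftrightarrow> u = w"
  by (metis eq_sub_iff zero_add zero_closed)

lemma sub_swap: "u \<in> C \<Longrightarrow> a \<in> C \<Longrightarrow> b \<in> C \<Longrightarrow> u = sub a b \<Longrightarrow> b = sub a u"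
  by (metis eq_sub_iff add_commute)

lemma neg_sub: "u \<in> C \<Longrightarrow> w \<in> C \<Longrightarrow> neg (sub u w) = sub w u"
  by (simp add: vsub_def neg_add_distrib add_commute)

lemma scl_sub: "u \<in> C \<Longrightarrow> w \<in> C \<Longrightarrow> scl a (sub u w) = sub (scl a u) (scl a w)"
  by (simp add: vsub_def scl_add_right mult.commute)

lemma sub_sub_sub: "a \<in> C \<Longrightarrow> b \<in> C \<Longrightarrow> c \<in> C \<Longrightarrow> d \<in> C \<Longrightarrow>
    sub (sub a b) (sub c d) = sub (sub a c) (sub b d)"
  by (simp add: vsub_def neg_add_distrib add_ac)

lemma nrm_sub_le: "u \<in> C \<Longrightarrow> w \<in> C \<Longrightarrow> nrm (sub u w) \<le> nrm u + nrm w"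
  unfolding vsub_def using nrm_triangle[of u "neg w"] by simp

definition add_monoid :: "'v monoid" where
  "add_monoid = \<lparr>carrier = C, monoid.mult = add, monoid.one = zero\<rparr>"

lemma comm_monoid_add_monoid: "comm_monoid add_monoid"
  unfolding add_monoid_def by unfold_locales (auto simp: add_assoc, metis add_assoc add_commute add_closed)

definition setsum :: "('a \<Rightarrow> 'v) \<Rightarrow> 'a set \<Rightarrow> 'v" where
  "setsum f A = finprod add_monoid f A"

lemma setsum_closed[simp]: "(\<And>a. a \<in> A \<Longrightarrow> f a \<in> C) \<Longrightarrow> setsum f A \<in> C"
  unfolding setsum_def using comm_monoid.finprod_closed[OF comm_monoid_add_monoid, of f A]
  by (auto simp: add_monoid_def)

lemma setsum_infinite: "infinite A \<Longrightarrow> setsum f A = zero"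
  and setsum_empty[simp]: "setsum f {} = zero"
  unfolding setsum_def
  using comm_monoid.finprod_infinite[OF comm_monoid_add_monoid] comm_monoid.finprod_empty[OF comm_monoid_add_monoid]
  by (simp_all add: add_monoid_def)

lemma setsum_insert[simp]: "finite A \<Longrightarrow> a \<notin> A \<Longrightarrow> f a \<in> C \<Longrightarrow> (\<And>b. b \<in> A \<Longrightarrow> f b \<in> C)
    \<Longrightarrow> setsum f (insert a A) = add (f a) (setsum f A)"
  unfolding setsum_def using comm_monoid.finprod_insert[OF comm_monoid_add_monoid, of A a f]
  by (auto simp: add_monoid_def)

lemma setsum_cong: "(\<And>a. a \<in> A \<Longrightarrow> f a = g a) \<Longrightarrow> (\<And>a. a \<in> A \<Longrightarrow> g a \<in> C) \<Longrightarrow> setsum f A = setsum g A"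
  unfolding setsum_def by (rule comm_monoid.finprod_cong'[OF comm_monoid_add_monoid]) (auto simp: add_monoid_def)

lemma setsum_reindex_bij_betw: "bij_betw h A B \<Longrightarrow> (\<And>b. b \<in> B \<Longrightarrow> f b \<in> C) \<Longrightarrow>
    setsum f B = setsum (\<lambda>a. f (h a)) A"
  unfolding setsum_def bij_betw_def
  using comm_monoid.finprod_reindex[OF comm_monoid_add_monoid, of f h A]
  by (auto simp: comp_def add_monoid_def)

lemma setsum_add: "(\<And>a. a \<in> A \<Longrightarrow> f a \<in> C) \<Longrightarrow> (\<And>a. a \<in> A \<Longrightarrow> g a \<in> C) \<Longrightarrow>
    setsum (\<lambda>a. add (f a) (g a)) A = add (setsum f A) (setsum g A)"
  unfolding setsum_def using comm_monoid.finprod_multf[OF comm_monoid_add_monoid, of f A g]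
  by (auto simp: add_monoid_def)

lemma setsum_additive:
  assumes L: "\<And>u w. u \<in> C \<Longrightarrow> w \<in> C \<Longrightarrow> L (add u w) = add (L u) (L w)" "L zero = zero"
      and L_closed: "\<And>u. u \<in> C \<Longrightarrow> L u \<in> C"
      and f: "\<And>a. a \<in> A \<Longrightarrow> f a \<in> C"
  shows "L (setsum f A) = setsum (\<lambda>a. L (f a)) A"
  using f
proof (induct A rule: infinite_finite_induct)
  case (insert a A)
  then show ?case
    by (simp add: L L_closed)
qed (simp_all add: setsum_infinite L)

lemma setsum_scl: "(\<And>a. a \<in> A \<Longrightarrow> f a \<in> C) \<Longrightarrow> setsum (\<lambda>a. scl r (f a)) A = scl r (setsum f A)"
  by (rule setsum_additive[symmetric]) (auto simp: scl_add_right)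

lemma setsum_sub: "(\<And>a. a \<in> A \<Longrightarrow> f a \<in> C) \<Longrightarrow> (\<And>a. a \<in> A \<Longrightarrow> g a \<in> C) \<Longrightarrow>
    setsum (\<lambda>a. sub (f a) (g a)) A = sub (setsum f A) (setsum g A)"
  unfolding vsub_def by (simp add: setsum_add setsum_scl)

lemma setsum_const: "u \<in> C \<Longrightarrow> setsum (\<lambda>_. u) A = scl (real (card A)) u"
  by (induct A rule: infinite_finite_induct) (simp_all add: setsum_infinite scl_add_left)

lemma nrm_setsum_le: "(\<And>a. a \<in> A \<Longrightarrow> f a \<in> C) \<Longrightarrow> nrm (setsum f A) \<le> (\<Sum>a\<in>A. nrm (f a))"
proof (induct A rule: infinite_finite_induct)
  case (insert a A)
  then have "nrm (setsum f (insert a A)) \<le> nrm (f a) + nrm (setsum f A)"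
    by (simp add: nrm_triangle)
  with insert show ?case by simp
qed (simp_all add: setsum_infinite)

definition average :: "'a set \<Rightarrow> ('a \<Rightarrow> 'v) \<Rightarrow> 'v" where
  "average A f = scl (1 / real (card A)) (setsum f A)"

lemma average_closed[simp]: "(\<And>a. a \<in> A \<Longrightarrow> f a \<in> C) \<Longrightarrow> average A f \<in> C"
  by (simp add: average_def)

lemma average_cong: "(\<And>a. a \<in> A \<Longrightarrow> f a = g a) \<Longrightarrow> (\<And>a. a \<in> A \<Longrightarrow> g a \<in> C) \<Longrightarrow>
    average A f = average A g"
  unfolding average_def by (metis setsum_cong)

lemma average_const: "finite A \<Longrightarrow> A \<noteq> {} \<Longrightarrow> u \<in> C \<Longrightarrow> (\<And>a. a \<in> A \<Longrightarrow> f a = u) \<Longrightarrow> average A f = u"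
  using average_cong[of A f "\<lambda>_. u"] by (simp add: average_def setsum_const)

lemma average_sub: "(\<And>a. a \<in> A \<Longrightarrow> f a \<in> C) \<Longrightarrow> (\<And>a. a \<in> A \<Longrightarrow> g a \<in> C) \<Longrightarrow>
    average A (\<lambda>a. sub (f a) (g a)) = sub (average A f) (average A g)"
  by (simp add: average_def setsum_sub scl_sub)

lemma average_scl: "(\<And>a. a \<in> A \<Longrightarrow> f a \<in> C) \<Longrightarrow> average A (\<lambda>a. scl r (f a)) = scl r (average A f)"
  by (simp add: average_def setsum_scl mult.commute)

lemma average_linear:
  assumes "\<And>u w. u \<in> C \<Longrightarrow> w \<in> C \<Longrightarrow> L (add u w) = add (L u) (L w)" "L zero = zero"
      and "\<And>u r. u \<in> C \<Longrightarrow> L (scl r u) = scl r (L u)"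
      and "\<And>u. u \<in> C \<Longrightarrow> L u \<in> C"
      and "\<And>a. a \<in> A \<Longrightarrow> f a \<in> C"
  shows "L (average A f) = average A (\<lambda>a. L (f a))"
  unfolding average_def using assms by (simp add: setsum_additive[where L=L])

lemma average_reindex_bij_betw: "bij_betw h A B \<Longrightarrow> (\<And>b. b \<in> B \<Longrightarrow> f b \<in> C) \<Longrightarrow>
    average B f = average A (\<lambda>a. f (h a))"
  unfolding average_def using setsum_reindex_bij_betw bij_betw_same_card by metis

lemma nrm_average_le:
  assumes "\<And>a. a \<in> A \<Longrightarrow> f a \<in> C" "\<And>a. a \<in> A \<Longrightarrow> nrm (f a) \<le> c" "0 \<le> c"
  shows "nrm (average A f) \<le> c"
proof (cases "finite A \<and> A \<noteq> {}")
  case True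
  have "nrm (average A f) = (1 / real (card A)) * nrm (setsum f A)"
    using assms by (simp add: average_def)
  also have "\<dots> \<le> (1 / real (card A)) * (\<Sum>a\<in>A. c)"
    using nrm_setsum_le[of A f] sum_mono[of A "\<lambda>a. nrm (f a)" "\<lambda>_. c"] assms
    by (intro mult_left_mono) auto
  also have "\<dots> = c" using True by simp
  finally show ?thesis .
next
  case False
  then show ?thesis using assms by (auto simp: average_def setsum_infinite)
qed

lemma vsum_closed[simp]: "(\<And>u. u \<in> set us \<Longrightarrow> u \<in> C) \<Longrightarrow> vsum V us \<in> C"
  by (induct us) auto

lemma vsum_map_closed[simp]: "(\<And>i. i \<in> set is \<Longrightarrow> f i \<in> C) \<Longrightarrow> vsum V (map f is) \<in> C"
  by (rule vsum_closed) auto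

lemma vsum_map_additive:
  assumes L: "\<And>u w. u \<in> C \<Longrightarrow> w \<in> C \<Longrightarrow> L (add u w) = add (L u) (L w)" "L zero = zero"
      and f: "\<And>i. i \<in> set is \<Longrightarrow> f i \<in> C"
  shows "L (vsum V (map f is)) = vsum V (map (\<lambda>i. L (f i)) is)"
  using f
proof (induct "is")
  case (Cons i "is")
  then have "vsum V (map f is) \<in> C" "f i \<in> C" by auto
  with Cons show ?case by (simp add: L)
qed (simp add: L)

lemma vsum_map_add:
  assumes "\<And>i. i \<in> set is \<Longrightarrow> f i \<in> C" "\<And>i. i \<in> set is \<Longrightarrow> g i \<in> C"
  shows "vsum V (map (\<lambda>i. add (f i) (g i)) is) = add (vsum V (map f is)) (vsum V (map g is))"
  using assms
proof (induct "is")
  case (Cons i "is")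
  then have "vsum V (map f is) \<in> C" "vsum V (map g is) \<in> C" "f i \<in> C" "g i \<in> C" by auto
  with Cons show ?case by (simp add: add_ac)
qed simp

lemma vsum_map_scl: "(\<And>i. i \<in> set is \<Longrightarrow> f i \<in> C) \<Longrightarrow>
    vsum V (map (\<lambda>i. scl r (f i)) is) = scl r (vsum V (map f is))"
  by (simp add: vsum_map_additive[of "scl r", symmetric] scl_add_right)

lemma vsum_map_sub: "(\<And>i. i \<in> set is \<Longrightarrow> f i \<in> C) \<Longrightarrow> (\<And>i. i \<in> set is \<Longrightarrow> g i \<in> C) \<Longrightarrow>
    vsum V (map (\<lambda>i. sub (f i) (g i)) is) = sub (vsum V (map f is)) (vsum V (map g is))"
  unfolding vsub_def by (simp add: vsum_map_add vsum_map_scl)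

lemma average_vsum: "(\<And>a i. a \<in> A \<Longrightarrow> i \<in> set is \<Longrightarrow> F a i \<in> C) \<Longrightarrow>
    average A (\<lambda>a. vsum V (map (F a) is)) = vsum V (map (\<lambda>i. average A (\<lambda>a. F a i)) is)"
proof (induct "is")
  case (Cons i "is")
  then have "\<And>a. a \<in> A \<Longrightarrow> vsum V (map (F a) is) \<in> C" "\<And>a. a \<in> A \<Longrightarrow> F a i \<in> C" by auto
  with Cons show ?case
    by (simp add: average_def setsum_add scl_add_right)
qed (simp add: average_def setsum_const)

end

section \<open>Bounded cochains\<close>

context normed_vs
begin

lemma cobound_closed[simp]: "(\<And>zs. f zs \<in> C) \<Longrightarrow> cobound V f xs \<in> C"
  unfolding cobound_def by simp

lemma cobound_Cons:
  assumes f: "\<And>zs. f zs \<in> C"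
  shows "cobound V f (y # xs) = sub (f xs) (cobound V (\<lambda>zs. f (y # zs)) xs)"
proof -
  have "[0..<length (y # xs)] = 0 # map Suc [0..<length xs]"
    by (simp add: upt_conv_Cons map_Suc_upt del: upt_Suc)
  then have "cobound V f (y # xs) =
      add (f xs) (vsum V (map (\<lambda>i. scl (-1) (scl ((-1) ^ i) (f (y # (take i xs @ drop (Suc i) xs))))) [0..<length xs]))"
    unfolding cobound_def using f by (simp add: comp_def)
  also have "\<dots> = add (f xs) (neg (cobound V (\<lambda>zs. f (y # zs)) xs))"
    unfolding cobound_def using f by (subst vsum_map_scl) auto
  finally show ?thesis by (simp add: vsub_def)
qed

lemma cobound_sub:
  assumes f: "\<And>zs. f zs \<in> C" and g: "\<And>zs. g zs \<in> C"
  shows "cobound V (\<lambda>zs. sub (f zs) (g zs)) xs = sub (cobound V f xs) (cobound V g xs)"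
  unfolding cobound_def using f g by (simp add: scl_sub vsum_map_sub[symmetric])

lemma cobound_scl:
  assumes f: "\<And>zs. f zs \<in> C"
  shows "cobound V (\<lambda>zs. scl r (f zs)) xs = scl r (cobound V f xs)"
  unfolding cobound_def using f by (simp add: mult.commute vsum_map_scl[symmetric])

lemma cobound_zero[simp]: "cobound V (\<lambda>_. zero) xs = zero"
  using cobound_scl[of "\<lambda>_. zero" 0 xs] by simp

lemma cobound_cong:
  assumes "\<And>zs. Suc (length zs) = length xs \<Longrightarrow> set zs \<subseteq> set xs \<Longrightarrow> f zs = g zs"
  shows "cobound V f xs = cobound V g xs"
proof -
  have "set (take i xs @ drop (Suc i) xs) \<subseteq> set xs" for i
    by (auto dest: in_set_takeD in_set_dropD)
  then show ?thesis
    unfolding cobound_def using assms by (intro arg_cong[where f="vsum V"] map_cong) auto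
qed

lemma cobound_average:
  assumes "\<And>a zs. F a zs \<in> C"
  shows "cobound V (\<lambda>zs. average A (\<lambda>a. F a zs)) xs = average A (\<lambda>a. cobound V (F a) xs)"
  unfolding cobound_def using assms by (simp add: average_vsum average_scl)

definition lincomb :: "real list \<Rightarrow> 'v list \<Rightarrow> 'v" where
  "lincomb cs us = vsum V (map (\<lambda>(c, u). scl c u) (zip cs us))"

lemma lincomb_Nil[simp]: "lincomb [] us = zero"
  and lincomb_Cons[simp]: "lincomb (c # cs) (u # us) = add (scl c u) (lincomb cs us)"
  by (simp_all add: lincomb_def)

lemma lincomb_closed: "set us \<subseteq> C \<Longrightarrow> lincomb cs us \<in> C"
  unfolding lincomb_def by (rule vsum_closed) (auto dest: set_zip_rightD)

lemma lincomb_add: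
  "length cs = length us \<Longrightarrow> length ds = length us \<Longrightarrow> set us \<subseteq> C \<Longrightarrow>
    add (lincomb cs us) (lincomb ds us) = lincomb (map2 (+) cs ds) us"
proof (induct us arbitrary: cs ds)
  case (Cons u us)
  then obtain c cs' d ds' where cd: "cs = c # cs'" "ds = d # ds'" by (metis length_Suc_conv)
  have "lincomb cs' us \<in> C" "lincomb ds' us \<in> C" "u \<in> C"
    using Cons by (auto intro: lincomb_closed)
  then have "add (lincomb cs (u # us)) (lincomb ds (u # us)) =
      add (add (scl c u) (scl d u)) (add (lincomb cs' us) (lincomb ds' us))"
    using cd by (simp add: add_ac)
  also have "\<dots> = lincomb (map2 (+) cs ds) (u # us)"
    using Cons cd \<open>u \<in> C\<close> by (simp add: scl_add_left)
  finally show ?case .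
qed simp

lemma lincomb_scl: "set us \<subseteq> C \<Longrightarrow> scl r (lincomb cs us) = lincomb (map ((*) r) cs) us"
proof (induct us arbitrary: cs)
  case (Cons u us)
  then show ?case
    by (cases cs) (auto simp: scl_add_right lincomb_closed)
qed (simp add: lincomb_def)

lemma lincomb_sub:
  assumes "length cs = length us" "length ds = length us" "set us \<subseteq> C"
  shows "sub (lincomb cs us) (lincomb ds us) = lincomb (map2 (\<lambda>a b. a - b) cs ds) us"
proof -
  have "map2 (+) cs (map ((*) (-1)) ds) = map2 (\<lambda>a b. a - b) cs ds"
    by (simp add: zip_map2 case_prod_beta)
  with assms show ?thesis
    unfolding vsub_def by (simp add: lincomb_scl lincomb_add)
qed

text \<open>The six vectors are written as linear combinations of themselves, which turns the
  identity into a computation with real coefficient lists.\<close>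

lemma homotopy_step_identity:
  assumes "P \<in> C" "Q \<in> C" "R \<in> C" "a1 \<in> C" "a2 \<in> C" "e \<in> C" "q \<in> C"
    and "add Q R = sub a1 q"
  shows "add (sub P (sub (sub a1 (sub a2 e)) Q)) (sub e (sub P R)) = sub a2 q"
proof -
  have Q: "Q = sub (sub a1 q) R" using assms by (simp add: eq_sub_iff)
  define L where "L cs = lincomb cs [P, R, a1, a2, e, q]" for cs
  have atoms: "P = L [1,0,0,0,0,0]" "R = L [0,1,0,0,0,0]" "a1 = L [0,0,1,0,0,0]"
     "a2 = L [0,0,0,1,0,0]" "e = L [0,0,0,0,1,0]" "q = L [0,0,0,0,0,1]"
    using assms by (simp_all add: L_def)
  have "length cs = 6 \<Longrightarrow> length ds = 6 \<Longrightarrow> sub (L cs) (L ds) = L (map2 (\<lambda>a b. a - b) cs ds)"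
       "length cs = 6 \<Longrightarrow> length ds = 6 \<Longrightarrow> add (L cs) (L ds) = L (map2 (+) cs ds)" for cs ds
    unfolding L_def using assms by (simp_all add: lincomb_sub lincomb_add)
  then show ?thesis unfolding Q by (subst atoms)+ simp
qed

end

text \<open>The group parameter of a module only enters through its action; \<open>forget_action V\<close> is
  \<open>V\<close> retyped to another group (with trivial action), so that \<open>cobound\<close> applies to cochains
  on that group.\<close>

definition forget_action :: "('g, 'v) gmod \<Rightarrow> ('k, 'v) gmod" where
  "forget_action V = \<lparr>vcarrier = vcarrier V, vzero = vzero V, vadd = vadd V, vscale = vscale V,
     vnorm = vnorm V, act = (\<lambda>_ u. u)\<rparr>"

lemma forget_action_simps[simp]:
  "vcarrier (forget_action V) = vcarrier V" "vzero (forget_action V) = vzero V"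
  "vadd (forget_action V) = vadd V" "vscale (forget_action V) = vscale V"
  "vnorm (forget_action V) = vnorm V"
  by (simp_all add: forget_action_def)

lemma vsub_forget_action[simp]: "vsub (forget_action V) = vsub V"
  by (simp add: vsub_def[abs_def])

lemma normed_space_forget_action: "normed_space (forget_action V) = normed_space V"
  unfolding normed_space_def by simp

lemma cobound_eqI:
  "vadd V1 = vadd V2 \<Longrightarrow> vzero V1 = vzero V2 \<Longrightarrow> vscale V1 = vscale V2 \<Longrightarrow>
    cobound V1 f xs = cobound V2 f xs"
proof -
  assume "vadd V1 = vadd V2" "vzero V1 = vzero V2" "vscale V1 = vscale V2"
  moreover from calculation have "vsum V1 l = vsum V2 l" for l
    by (induct l) simp_all
  ultimately show ?thesis
    unfolding cobound_def by simp
qed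

lemma tuples_carrier: "xs \<in> tuples G n \<Longrightarrow> set xs \<subseteq> carrier G"
  and length_tuples: "xs \<in> tuples G n \<Longrightarrow> length xs = Suc n"
  by (simp_all add: tuples_def)

lemma tuples_nonempty: "monoid G \<Longrightarrow> tuples G n \<noteq> {}"
  using monoid.one_closed[of G] by (auto simp: tuples_def intro!: exI[of _ "replicate (Suc n) \<one>\<^bsub>G\<^esub>"])

lemma Cb_closed: "f \<in> Cb G V n \<Longrightarrow> xs \<in> tuples G n \<Longrightarrow> f xs \<in> vcarrier V"
  and Cb_equivariant: "f \<in> Cb G V n \<Longrightarrow> g \<in> carrier G \<Longrightarrow> xs \<in> tuples G n \<Longrightarrow>
    f (map ((\<otimes>\<^bsub>G\<^esub>) g) xs) = act V g (f xs)"
  by (simp_all add: Cb_def)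

lemma Cb_bounded:
  assumes "f \<in> Cb G V n"
  shows "\<exists>c\<ge>0. \<forall>xs\<in>tuples G n. vnorm V (f xs) \<le> c"
proof -
  from assms obtain c where "\<forall>xs\<in>tuples G n. vnorm V (f xs) \<le> c"
    by (auto simp: Cb_def)
  then show ?thesis
    by (intro exI[of _ "max c 0"]) auto
qed

lemma Zb_Cb: "f \<in> Zb G V n \<Longrightarrow> f \<in> Cb G V n"
  and Zb_cobound: "f \<in> Zb G V n \<Longrightarrow> xs \<in> tuples G (Suc n) \<Longrightarrow> cobound V f xs = vzero V"
  by (simp_all add: Zb_def)

lemma supnorm_upper:
  "f \<in> Cb G V n \<Longrightarrow> xs \<in> tuples G n \<Longrightarrow> vnorm V (f xs) \<le> supnorm G V n f"
  unfolding supnorm_def by (rule cSUP_upper) (auto simp: bdd_above_def dest!: Cb_bounded)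

lemma supnorm_nonneg:
  assumes "monoid G" "f \<in> Cb G V n" "\<And>u. u \<in> vcarrier V \<Longrightarrow> 0 \<le> vnorm V u"
  shows "0 \<le> supnorm G V n f"
proof -
  obtain xs where xs: "xs \<in> tuples G n" using tuples_nonempty[OF assms(1)] by blast
  then have "0 \<le> vnorm V (f xs)" using assms(2,3) by (simp add: Cb_closed)
  also have "\<dots> \<le> supnorm G V n f" by (rule supnorm_upper[OF assms(2) xs])
  finally show ?thesis .
qed

lemma is_cobdry_cong:
  "(\<And>xs. xs \<in> tuples G n \<Longrightarrow> f xs = g xs) \<Longrightarrow> is_cobdry G W n f = is_cobdry G W n g"
  by (cases n) (simp_all add: is_cobdry_def)

section \<open>Inflation\<close>

locale inflation_setup = normed_vs V for V :: "('g, 'v) gmod" +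
  fixes \<Gamma> :: "'g monoid" and K :: "'k monoid" and \<phi> :: "'g \<Rightarrow> 'k"
  assumes group_\<Gamma>: "group \<Gamma>" and group_K: "group K" and hom: "\<phi> \<in> hom \<Gamma> K"
    and surj: "\<phi> ` carrier \<Gamma> = carrier K"
    and normed_gmod: "normed_gmod \<Gamma> V"
begin

sublocale \<Gamma>: group \<Gamma> by (rule group_\<Gamma>)
sublocale K: group K by (rule group_K)

lemma group_hom: "group_hom \<Gamma> K \<phi>"
  using group_\<Gamma> group_K hom by (simp add: group_hom_def group_hom_axioms_def)

lemma hom_closed[simp]: "g \<in> carrier \<Gamma> \<Longrightarrow> \<phi> g \<in> carrier K"
  and hom_mult[simp]: "g \<in> carrier \<Gamma> \<Longrightarrow> h \<in> carrier \<Gamma> \<Longrightarrow> \<phi> (g \<otimes>\<^bsub>\<Gamma>\<^esub> h) = \<phi> g \<otimes>\<^bsub>K\<^esub> \<phi> h"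
  and hom_inv[simp]: "g \<in> carrier \<Gamma> \<Longrightarrow> \<phi> (inv\<^bsub>\<Gamma>\<^esub> g) = inv\<^bsub>K\<^esub> \<phi> g"
  using group_hom.hom_closed[OF group_hom] group_hom.hom_mult[OF group_hom] group_hom.hom_inv[OF group_hom]
  by blast+

abbreviation "ker \<equiv> kernel \<Gamma> K \<phi>"
abbreviation "VH \<equiv> fixmod \<Gamma> K \<phi> V"
abbreviation "VK \<equiv> forget_action V :: ('k, 'v) gmod"

sublocale VK: normed_vs VK
  by unfold_locales (simp add: normed_space_forget_action normed_space)

lemma act_closed[simp]: "g \<in> carrier \<Gamma> \<Longrightarrow> u \<in> C \<Longrightarrow> act V g u \<in> C"
  and act_add: "g \<in> carrier \<Gamma> \<Longrightarrow> u \<in> C \<Longrightarrow> w \<in> C \<Longrightarrow> act V g (add u w) = add (act V g u) (act V g w)"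
  and act_scl: "g \<in> carrier \<Gamma> \<Longrightarrow> u \<in> C \<Longrightarrow> act V g (scl a u) = scl a (act V g u)"
  and act_mult: "g \<in> carrier \<Gamma> \<Longrightarrow> h \<in> carrier \<Gamma> \<Longrightarrow> u \<in> C \<Longrightarrow>
    act V (g \<otimes>\<^bsub>\<Gamma>\<^esub> h) u = act V g (act V h u)"
  using normed_gmod unfolding normed_gmod_def by simp_all

lemma act_zero[simp]: "g \<in> carrier \<Gamma> \<Longrightarrow> act V g zero = zero"
  using act_scl[of g zero 0] by simp

lemma act_sub: "g \<in> carrier \<Gamma> \<Longrightarrow> u \<in> C \<Longrightarrow> w \<in> C \<Longrightarrow> act V g (sub u w) = sub (act V g u) (act V g w)"
  by (simp add: vsub_def act_add act_scl)

lemma lift_exists: "k \<in> carrier K \<Longrightarrow> \<exists>g\<in>carrier \<Gamma>. \<phi> g = k"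
  using surj by (metis imageE)

definition fibre :: "'k \<Rightarrow> 'g set" where
  "fibre k = {g \<in> carrier \<Gamma>. \<phi> g = k}"

lemma fibre_one: "fibre \<one>\<^bsub>K\<^esub> = ker"
  by (simp add: fibre_def kernel_def)

lemma bij_betw_fibre_mult:
  assumes g: "g \<in> carrier \<Gamma>" and k: "k \<in> carrier K"
  shows "bij_betw (\<lambda>y. g \<otimes>\<^bsub>\<Gamma>\<^esub> y) (fibre k) (fibre (\<phi> g \<otimes>\<^bsub>K\<^esub> k))"
proof (rule bij_betwI[where g="\<lambda>z. inv\<^bsub>\<Gamma>\<^esub> g \<otimes>\<^bsub>\<Gamma>\<^esub> z"])
  have "\<phi> (inv\<^bsub>\<Gamma>\<^esub> g \<otimes>\<^bsub>\<Gamma>\<^esub> z) = k" if "z \<in> carrier \<Gamma>" "\<phi> z = \<phi> g \<otimes>\<^bsub>K\<^esub> k" for z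
    using that g k by (simp add: K.m_assoc[symmetric] K.l_inv)
  then show "(\<lambda>z. inv\<^bsub>\<Gamma>\<^esub> g \<otimes>\<^bsub>\<Gamma>\<^esub> z) \<in> fibre (\<phi> g \<otimes>\<^bsub>K\<^esub> k) \<rightarrow> fibre k"
    using g by (auto simp: fibre_def)
qed (use g in \<open>auto simp: fibre_def \<Gamma>.m_assoc[symmetric]\<close>)

lemma bij_betw_kernel_fibre:
  assumes k: "k \<in> carrier K"
  obtains g where "g \<in> carrier \<Gamma>" "bij_betw (\<lambda>y. g \<otimes>\<^bsub>\<Gamma>\<^esub> y) ker (fibre k)"
proof -
  obtain g where g: "g \<in> carrier \<Gamma>" "\<phi> g = k" using lift_exists[OF k] by blast
  then have "\<phi> g \<otimes>\<^bsub>K\<^esub> \<one>\<^bsub>K\<^esub> = k" using k by simp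
  then show ?thesis
    using that[OF g(1)] bij_betw_fibre_mult[OF g(1) K.one_closed] by (simp add: fibre_one)
qed

lemma fixmod_simps[simp]:
  "vcarrier VH = {u \<in> C. \<forall>h\<in>ker. act V h u = u}" "vzero VH = zero"
  "vadd VH = add" "vscale VH = scl" "vnorm VH = nrm"
  by (simp_all add: fixmod_def)

lemma vsub_fixmod[simp]: "vsub VH = sub"
  by (simp add: vsub_def[abs_def])

lemma cobound_fixmod: "cobound VH f ks = cobound VK f ks"
  by (rule cobound_eqI) simp_all

text \<open>\<open>fixmod\<close> lets \<open>k\<close> act through an arbitrary preimage; on \<open>H\<close>-fixed vectors the choice does
  not matter.\<close>

lemma act_fixmod:
  assumes g: "g \<in> carrier \<Gamma>" and u: "u \<in> vcarrier VH"
  shows "act VH (\<phi> g) u = act V g u"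
proof -
  define g' where "g' = (SOME g'. g' \<in> carrier \<Gamma> \<and> \<phi> g' = \<phi> g)"
  have g': "g' \<in> carrier \<Gamma>" "\<phi> g' = \<phi> g"
    unfolding g'_def by (rule someI2[of _ g]; use g in simp)+
  define h where "h = inv\<^bsub>\<Gamma>\<^esub> g \<otimes>\<^bsub>\<Gamma>\<^esub> g'"
  have h: "h \<in> carrier \<Gamma>" "g' = g \<otimes>\<^bsub>\<Gamma>\<^esub> h"
    using g g' by (simp_all add: h_def \<Gamma>.m_assoc[symmetric])
  have "h \<in> ker"
    using g g' h(1) by (simp add: kernel_def h_def K.l_inv)
  then have "act V g' u = act V g u"
    using g h u by (simp add: act_mult)
  then show ?thesis
    by (simp add: fixmod_def g'_def)
qed

lemma map_hom_tuples: "xs \<in> tuples \<Gamma> n \<Longrightarrow> map \<phi> xs \<in> tuples K n"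
  by (auto simp: tuples_def)

lemma tuples_image: "map \<phi> ` tuples \<Gamma> n = tuples K n"
proof
  show "tuples K n \<subseteq> map \<phi> ` tuples \<Gamma> n"
  proof
    fix ks assume ks: "ks \<in> tuples K n"
    have "\<forall>k\<in>set ks. \<exists>g\<in>carrier \<Gamma>. \<phi> g = k"
      using ks lift_exists by (auto simp: tuples_def)
    then obtain xs where "list_all2 (\<lambda>g k. g \<in> carrier \<Gamma> \<and> \<phi> g = k) xs ks"
      by (induct ks) (auto intro: list_all2_Cons)
    then have "xs \<in> tuples \<Gamma> n" "map \<phi> xs = ks"
      using ks by (auto simp: tuples_def list_all2_conv_all_nth list_eq_iff_nth_eq set_conv_nth)
    then show "ks \<in> map \<phi> ` tuples \<Gamma> n" by blast
  qed
qed (use map_hom_tuples in auto)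

lemma lift_tuples: "set ys \<subseteq> carrier \<Gamma> \<Longrightarrow> map \<phi> ys \<in> tuples K n \<Longrightarrow> ys \<in> tuples \<Gamma> n"
  by (simp add: tuples_def)

lemma cobound_map_hom: "cobound V (\<lambda>zs. f (map \<phi> zs)) xs = cobound VK f (map \<phi> xs)"
proof -
  have "vsum VK us = vsum V us" for us
    by (induct us) simp_all
  then have vsum_eq: "vsum VK = vsum V" ..
  show ?thesis
    unfolding cobound_def length_map forget_action_simps vsum_eq
    by (intro arg_cong[where f="vsum V"] map_cong) (simp_all only: take_map drop_map map_append)
qed

lemma cobound_infl: "cobound V (infl \<phi> f) xs = cobound VH f (map \<phi> xs)"
  unfolding infl_def cobound_fixmod by (rule cobound_map_hom)

lemma infl_Cb:
  assumes f: "f \<in> Cb K VH n"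
  shows "infl \<phi> f \<in> Cb \<Gamma> V n"
  unfolding Cb_def infl_def
proof (intro CollectI conjI ballI)
  show "f (map \<phi> xs) \<in> C" if "xs \<in> tuples \<Gamma> n" for xs
    using Cb_closed[OF f map_hom_tuples[OF that]] by simp
  show "\<exists>c. \<forall>xs\<in>tuples \<Gamma> n. nrm (f (map \<phi> xs)) \<le> c"
    using Cb_bounded[OF f] map_hom_tuples by fastforce
  fix g xs assume g: "g \<in> carrier \<Gamma>" and xs: "xs \<in> tuples \<Gamma> n"
  have "map \<phi> (map ((\<otimes>\<^bsub>\<Gamma>\<^esub>) g) xs) = map ((\<otimes>\<^bsub>K\<^esub>) (\<phi> g)) (map \<phi> xs)"
    using g tuples_carrier[OF xs] by auto
  then have "f (map \<phi> (map ((\<otimes>\<^bsub>\<Gamma>\<^esub>) g) xs)) = act VH (\<phi> g) (f (map \<phi> xs))"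
    using Cb_equivariant[OF f hom_closed[OF g] map_hom_tuples[OF xs]] by (simp only:)
  also have "\<dots> = act V g (f (map \<phi> xs))"
    by (rule act_fixmod[OF g Cb_closed[OF f map_hom_tuples[OF xs]]])
  finally show "f (map \<phi> (map ((\<otimes>\<^bsub>\<Gamma>\<^esub>) g) xs)) = act V g (f (map \<phi> xs))" .
qed

lemma cohomologous_infl:
  assumes coh: "cohomologous K VH n f f'"
  shows "cohomologous \<Gamma> V n (infl \<phi> f) (infl \<phi> f')"
proof (cases n)
  case 0
  then show ?thesis
    using coh map_hom_tuples unfolding cohomologous_def is_cobdry_def by (simp add: infl_def)
next
  case (Suc m)
  with coh obtain b where b: "b \<in> Cb K VH m" "\<forall>ks\<in>tuples K n. sub (f ks) (f' ks) = cobound VH b ks"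
    unfolding cohomologous_def is_cobdry_def by auto
  then have "\<forall>xs\<in>tuples \<Gamma> n. sub (infl \<phi> f xs) (infl \<phi> f' xs) = cobound V (infl \<phi> b) xs"
    using map_hom_tuples unfolding cobound_infl by (simp add: infl_def)
  with b(1) Suc show ?thesis
    unfolding cohomologous_def is_cobdry_def by (auto intro!: infl_Cb)
qed

lemma supnorm_infl: "supnorm \<Gamma> V n (infl \<phi> f) = supnorm K VH n f"
proof -
  have "(\<lambda>xs. nrm (f (map \<phi> xs))) ` tuples \<Gamma> n = (\<lambda>ks. nrm (f ks)) ` tuples K n"
    unfolding tuples_image[symmetric] image_image ..
  then show ?thesis unfolding supnorm_def infl_def by simp
qed

end

section \<open>Averaging over the fibres of \<open>\<phi>\<close> when the kernel is finite\<close>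

lemma (in inflation_setup) cobound_forget_action_closed[simp]:
  "(\<And>zs. f zs \<in> C) \<Longrightarrow> cobound VK f ks \<in> C"
  using VK.cobound_closed[of f ks] by simp

lemma (in inflation_setup) average_forget_action[simp]: "VK.average = average"
  by (simp add: VK.average_def[abs_def] average_def[abs_def] VK.setsum_def[abs_def] setsum_def[abs_def]
      VK.add_monoid_def add_monoid_def)

locale finite_kernel = inflation_setup V \<Gamma> K \<phi>
  for V :: "('g, 'v) gmod" and \<Gamma> :: "'g monoid" and K :: "'k monoid" and \<phi> :: "'g \<Rightarrow> 'k" +
  assumes finite_kernel: "finite (kernel \<Gamma> K \<phi>)"
begin

lemma fibre_finite: "k \<in> carrier K \<Longrightarrow> finite (fibre k)"
  using bij_betw_kernel_fibre bij_betw_finite finite_kernel by metis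

lemma fibre_nonempty: "k \<in> carrier K \<Longrightarrow> fibre k \<noteq> {}"
  using lift_exists by (auto simp: fibre_def)

text \<open>\<open>lift_avg F ks\<close> is the mean of \<open>F\<close> over all lifts of \<open>ks\<close> along \<open>\<phi>\<close>, computed one
  coordinate at a time; this is legitimate because all fibres have the size of the kernel.\<close>

fun lift_avg :: "('g list \<Rightarrow> 'v) \<Rightarrow> 'k list \<Rightarrow> 'v" where
  "lift_avg F [] = F []"
| "lift_avg F (k # ks) = average (fibre k) (\<lambda>y. lift_avg (\<lambda>ys. F (y # ys)) ks)"

lemma lift_avg_closed[simp]: "(\<And>zs. F zs \<in> C) \<Longrightarrow> lift_avg F ks \<in> C"
  by (induct ks arbitrary: F) simp_all

lemma lift_avg_cong:
  assumes "\<And>ys. set ys \<subseteq> carrier \<Gamma> \<Longrightarrow> map \<phi> ys = ks \<Longrightarrow> F ys = G ys" "\<And>zs. G zs \<in> C"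
  shows "lift_avg F ks = lift_avg G ks"
  using assms
proof (induct ks arbitrary: F G)
  case (Cons k ks)
  show ?case
    unfolding lift_avg.simps
    by (rule average_cong, rule Cons.hyps) (use Cons.prems in \<open>auto simp: fibre_def\<close>)
qed simp

lemma lift_avg_const:
  assumes "set ks \<subseteq> carrier K" "u \<in> C" "\<And>ys. set ys \<subseteq> carrier \<Gamma> \<Longrightarrow> map \<phi> ys = ks \<Longrightarrow> F ys = u"
  shows "lift_avg F ks = u"
  using assms
proof (induct ks arbitrary: F)
  case (Cons k ks)
  then have k: "k \<in> carrier K" by simp
  show ?case
    unfolding lift_avg.simps
    by (rule average_const[OF fibre_finite[OF k] fibre_nonempty[OF k] \<open>u \<in> C\<close>], rule Cons.hyps)
      (use Cons.prems in \<open>auto simp: fibre_def\<close>)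
qed simp

lemma lift_avg_sub:
  assumes "\<And>zs. F zs \<in> C" "\<And>zs. G zs \<in> C"
  shows "lift_avg (\<lambda>ys. sub (F ys) (G ys)) ks = sub (lift_avg F ks) (lift_avg G ks)"
  using assms
proof (induct ks arbitrary: F G)
  case (Cons k ks)
  then show ?case
    by (simp add: average_sub[symmetric] average_cong[where g="\<lambda>y. sub _ _"])
qed simp

lemma lift_avg_cobound:
  assumes "set ks \<subseteq> carrier K" "\<And>zs. F zs \<in> C"
  shows "lift_avg (cobound V F) ks = cobound VK (lift_avg F) ks"
  using assms
proof (induct ks arbitrary: F)
  case Nil
  then show ?case by (simp add: cobound_def)
next
  case (Cons k ks)
  then have k: "k \<in> carrier K" and ks: "set ks \<subseteq> carrier K" and F: "\<And>zs. F zs \<in> C"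
    by auto
  have "lift_avg (cobound V F) (k # ks) =
      average (fibre k) (\<lambda>y. sub (lift_avg F ks) (cobound VK (lift_avg (\<lambda>zs. F (y # zs))) ks))"
    unfolding lift_avg.simps using F Cons.hyps[OF ks]
    by (intro average_cong) (simp_all add: cobound_Cons lift_avg_sub)
  also have "\<dots> = sub (lift_avg F ks)
      (cobound VK (\<lambda>zs. average (fibre k) (\<lambda>y. lift_avg (\<lambda>ys. F (y # ys)) zs)) ks)"
    using F VK.cobound_average[of "\<lambda>y zs. lift_avg (\<lambda>ys. F (y # ys)) zs" "fibre k" ks]
    by (simp add: average_sub average_const[OF fibre_finite[OF k] fibre_nonempty[OF k], of "lift_avg F ks"])
  also have "\<dots> = cobound VK (lift_avg F) (k # ks)"
    using F by (simp add: VK.cobound_Cons)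
  finally show ?case .
qed

lemma lift_avg_equivariant:
  assumes g: "g \<in> carrier \<Gamma>" and "set ks \<subseteq> carrier K" "\<And>zs. F zs \<in> C" "\<And>zs. F' zs \<in> C"
    and "\<And>zs. set zs \<subseteq> carrier \<Gamma> \<Longrightarrow> F (map (\<lambda>z. g \<otimes>\<^bsub>\<Gamma>\<^esub> z) zs) = act V g (F' zs)"
  shows "lift_avg F (map (\<lambda>k. \<phi> g \<otimes>\<^bsub>K\<^esub> k) ks) = act V g (lift_avg F' ks)"
  using assms(2-)
proof (induct ks arbitrary: F F')
  case Nil
  then show ?case using Nil.prems(4)[of "[]"] by simp
next
  case (Cons k ks)
  then have k: "k \<in> carrier K" and ks: "set ks \<subseteq> carrier K" by auto
  have "lift_avg F (map (\<lambda>k. \<phi> g \<otimes>\<^bsub>K\<^esub> k) (k # ks)) =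
      average (fibre k) (\<lambda>y. lift_avg (\<lambda>ys. F ((g \<otimes>\<^bsub>\<Gamma>\<^esub> y) # ys)) (map (\<lambda>k. \<phi> g \<otimes>\<^bsub>K\<^esub> k) ks))"
    using Cons.prems by (simp add: average_reindex_bij_betw[OF bij_betw_fibre_mult[OF g k]])
  also have "\<dots> = average (fibre k) (\<lambda>y. act V g (lift_avg (\<lambda>ys. F' (y # ys)) ks))"
  proof (rule average_cong)
    fix y assume "y \<in> fibre k"
    then have y: "y \<in> carrier \<Gamma>" by (simp add: fibre_def)
    show "lift_avg (\<lambda>ys. F ((g \<otimes>\<^bsub>\<Gamma>\<^esub> y) # ys)) (map (\<lambda>k. \<phi> g \<otimes>\<^bsub>K\<^esub> k) ks) =
        act V g (lift_avg (\<lambda>ys. F' (y # ys)) ks)"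
    proof (rule Cons.hyps[OF ks])
      fix zs assume "set zs \<subseteq> carrier \<Gamma>"
      then show "F ((g \<otimes>\<^bsub>\<Gamma>\<^esub> y) # map (\<lambda>z. g \<otimes>\<^bsub>\<Gamma>\<^esub> z) zs) = act V g (F' (y # zs))"
        using Cons.prems(4)[of "y # zs"] y by simp
    qed (simp_all add: Cons.prems)
  qed (simp add: g Cons.prems)
  also have "\<dots> = act V g (lift_avg F' (k # ks))"
    unfolding lift_avg.simps
    by (rule average_linear[symmetric]) (simp_all add: g act_add act_scl Cons.prems)
  finally show ?case .
qed

lemma nrm_lift_avg_le:
  assumes "\<And>zs. F zs \<in> C" "\<And>zs. nrm (F zs) \<le> c" "0 \<le> c"
  shows "nrm (lift_avg F ks) \<le> c"
  using assms by (induct ks arbitrary: F) (simp_all add: nrm_average_le)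

end

lemma (in normed_vs) cobound_Cons_Cons:
  assumes f: "\<And>zs. f zs \<in> C"
  shows "cobound V (\<lambda>zs. f (x # y # zs)) ws = sub (f (x # ws)) (sub (f (y # ws)) (cobound V f (x # y # ws)))"
proof -
  have c1: "cobound V (\<lambda>zs. f (x # zs)) (y # ws) = sub (f (x # ws)) (cobound V (\<lambda>zs. f (x # y # zs)) ws)"
    using f by (rule cobound_Cons)
  have c2: "cobound V f (x # y # ws) = sub (f (y # ws)) (cobound V (\<lambda>zs. f (x # zs)) (y # ws))"
    using f by (rule cobound_Cons)
  have "cobound V (\<lambda>zs. f (x # y # zs)) ws = sub (f (x # ws)) (cobound V (\<lambda>zs. f (x # zs)) (y # ws))"
    by (rule sub_swap[OF _ _ _ c1]) (simp_all add: f)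
  also have "cobound V (\<lambda>zs. f (x # zs)) (y # ws) = sub (f (y # ws)) (cobound V f (x # y # ws))"
    by (rule sub_swap[OF _ _ _ c2]) (simp_all add: f)
  finally show ?thesis .
qed

context finite_kernel
begin

text \<open>A chain homotopy between \<open>infl \<phi> \<circ> lift_avg\<close> and the identity. Unfolding the recursion,
  \<open>homotopy f (x\<^sub>0,\<dots>,x\<^sub>n) = \<Sum>\<^sub>i (-1)\<^sup>i avg\<^sub>y f(x\<^sub>0,\<dots>,x\<^sub>i,y\<^sub>i,\<dots>,y\<^sub>n)\<close>,
  with \<open>y\<close> ranging over the lifts of \<open>(\<phi> x\<^sub>i,\<dots>,\<phi> x\<^sub>n)\<close>.\<close>

fun homotopy :: "('g list \<Rightarrow> 'v) \<Rightarrow> 'g list \<Rightarrow> 'v" where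
  "homotopy f [] = zero"
| "homotopy f (x # xs) = sub (lift_avg (\<lambda>ys. f (x # ys)) (map \<phi> (x # xs))) (homotopy (\<lambda>zs. f (x # zs)) xs)"

lemma homotopy_closed[simp]: "(\<And>zs. f zs \<in> C) \<Longrightarrow> homotopy f xs \<in> C"
  by (induct xs arbitrary: f) simp_all

lemma homotopy_sub:
  assumes "\<And>zs. f zs \<in> C" "\<And>zs. g zs \<in> C"
  shows "homotopy (\<lambda>zs. sub (f zs) (g zs)) xs = sub (homotopy f xs) (homotopy g xs)"
  using assms
proof (induct xs arbitrary: f g)
  case (Cons x xs)
  then show ?case
    by (simp add: lift_avg_sub sub_sub_sub del: lift_avg.simps)
qed simp

lemma cobound_lift_avg_Cons:
  assumes x: "x \<in> carrier \<Gamma>" and xs: "set xs \<subseteq> carrier \<Gamma>" and f: "\<And>zs. f zs \<in> C"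
  shows "cobound V (\<lambda>zs. lift_avg (\<lambda>ys. f (x # ys)) (map \<phi> (x # zs))) xs =
    sub (lift_avg (\<lambda>ys. f (x # ys)) (map \<phi> xs))
      (sub (lift_avg f (map \<phi> (x # xs))) (lift_avg (\<lambda>ys. cobound V f (x # ys)) (map \<phi> (x # xs))))"
proof -
  have \<phi>xs: "set (map \<phi> xs) \<subseteq> carrier K" using xs by auto
  have "cobound V (\<lambda>zs. lift_avg (\<lambda>ys. f (x # ys)) (map \<phi> (x # zs))) xs =
      average (fibre (\<phi> x)) (\<lambda>y. cobound V (\<lambda>zs. lift_avg (\<lambda>ys. f (x # y # ys)) (map \<phi> zs)) xs)"
    using f by (simp add: cobound_average)
  also have "\<dots> = average (fibre (\<phi> x)) (\<lambda>y. sub (lift_avg (\<lambda>ys. f (x # ys)) (map \<phi> xs))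
      (sub (lift_avg (\<lambda>ws. f (y # ws)) (map \<phi> xs)) (lift_avg (\<lambda>ws. cobound V f (x # y # ws)) (map \<phi> xs))))"
  proof (rule average_cong)
    fix y
    have "cobound V (\<lambda>ys. f (x # y # ys)) =
        (\<lambda>ws. sub (f (x # ws)) (sub (f (y # ws)) (cobound V f (x # y # ws))))"
      using f by (intro ext cobound_Cons_Cons)
    then show "cobound V (\<lambda>zs. lift_avg (\<lambda>ys. f (x # y # ys)) (map \<phi> zs)) xs =
        sub (lift_avg (\<lambda>ys. f (x # ys)) (map \<phi> xs)) (sub (lift_avg (\<lambda>ws. f (y # ws)) (map \<phi> xs))
          (lift_avg (\<lambda>ws. cobound V f (x # y # ws)) (map \<phi> xs)))"
      using f by (simp add: cobound_map_hom lift_avg_cobound[OF \<phi>xs, symmetric] lift_avg_sub)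
  qed (simp add: f)
  also have "\<dots> = sub (lift_avg (\<lambda>ys. f (x # ys)) (map \<phi> xs))
      (sub (lift_avg f (map \<phi> (x # xs))) (lift_avg (\<lambda>ys. cobound V f (x # ys)) (map \<phi> (x # xs))))"
    using f x by (simp add: average_sub fibre_finite fibre_nonempty
        average_const[of "fibre (\<phi> x)" "lift_avg (\<lambda>ys. f (x # ys)) (map \<phi> xs)"])
  finally show ?thesis .
qed

lemma homotopy_formula:
  assumes "set xs \<subseteq> carrier \<Gamma>" "\<And>zs. f zs \<in> C"
  shows "add (cobound V (homotopy f) xs) (homotopy (cobound V f) xs) = sub (lift_avg f (map \<phi> xs)) (f xs)"
  using assms
proof (induct xs arbitrary: f)
  case Nil
  then show ?case by (simp add: cobound_def)
next
  case (Cons x xs)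
  then have x: "x \<in> carrier \<Gamma>" and xs: "set xs \<subseteq> carrier \<Gamma>" and f: "\<And>zs. f zs \<in> C"
    by auto
  define f1 where "f1 = (\<lambda>zs. f (x # zs))"
  have f1: "\<And>zs. f1 zs \<in> C" by (simp add: f1_def f)
  define P where "P = homotopy f xs"
  define Q where "Q = cobound V (homotopy f1) xs"
  define R where "R = homotopy (cobound V f1) xs"
  define a1 where "a1 = lift_avg f1 (map \<phi> xs)"
  define a2 where "a2 = lift_avg f (map \<phi> (x # xs))"
  define e where "e = lift_avg (\<lambda>ys. cobound V f (x # ys)) (map \<phi> (x # xs))"
  define q where "q = f (x # xs)"
  have closed: "P \<in> C" "Q \<in> C" "R \<in> C" "a1 \<in> C" "a2 \<in> C" "e \<in> C" "q \<in> C"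
    by (simp_all add: P_def Q_def R_def a1_def a2_def e_def q_def f f1)
  have IH: "add Q R = sub a1 q"
    unfolding Q_def R_def a1_def q_def using Cons.hyps[of f1, OF xs f1] by (simp add: f1_def)
  have "cobound V (homotopy f) (x # xs) = sub P (cobound V (\<lambda>zs. homotopy f (x # zs)) xs)"
    unfolding P_def using f by (intro cobound_Cons) simp
  also have "cobound V (\<lambda>zs. homotopy f (x # zs)) xs =
      sub (cobound V (\<lambda>zs. lift_avg f1 (map \<phi> (x # zs))) xs) Q"
    unfolding Q_def using f1 by (simp add: f1_def cobound_sub)
  also have "cobound V (\<lambda>zs. lift_avg f1 (map \<phi> (x # zs))) xs = sub a1 (sub a2 e)"
    unfolding a1_def a2_def e_def f1_def by (rule cobound_lift_avg_Cons[OF x xs f])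
  finally have "cobound V (homotopy f) (x # xs) = sub P (sub (sub a1 (sub a2 e)) Q)" .
  moreover have "homotopy (cobound V f) (x # xs) = sub e (sub P R)"
    unfolding e_def P_def R_def f1_def using f by (simp add: cobound_Cons homotopy_sub)
  ultimately have "add (cobound V (homotopy f) (x # xs)) (homotopy (cobound V f) (x # xs)) = sub a2 q"
    using homotopy_step_identity[OF closed IH] by simp
  then show ?case unfolding a2_def q_def .
qed

lemma homotopy_eq_zero:
  assumes "set xs \<subseteq> carrier \<Gamma>" "\<And>zs. f zs \<in> C"
    and "\<And>zs. set zs \<subseteq> carrier \<Gamma> \<Longrightarrow> length zs = Suc (length xs) \<Longrightarrow> f zs = zero"
  shows "homotopy f xs = zero"
  using assms
proof (induct xs arbitrary: f)
  case (Cons x xs)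
  then have "lift_avg (\<lambda>ys. f (x # ys)) (map \<phi> (x # xs)) = zero"
    by (intro lift_avg_const) (auto dest!: arg_cong[where f=length])
  moreover have "homotopy (\<lambda>zs. f (x # zs)) xs = zero"
    by (rule Cons.hyps) (use Cons.prems in auto)
  ultimately show ?case by simp
qed simp

lemma homotopy_equivariant:
  assumes g: "g \<in> carrier \<Gamma>" and "set xs \<subseteq> carrier \<Gamma>" "\<And>zs. F zs \<in> C" "\<And>zs. F' zs \<in> C"
    and "\<And>zs. set zs \<subseteq> carrier \<Gamma> \<Longrightarrow> F (map (\<lambda>z. g \<otimes>\<^bsub>\<Gamma>\<^esub> z) zs) = act V g (F' zs)"
  shows "homotopy F (map (\<lambda>z. g \<otimes>\<^bsub>\<Gamma>\<^esub> z) xs) = act V g (homotopy F' xs)"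
  using assms(2-)
proof (induct xs arbitrary: F F')
  case (Cons x xs)
  then have x: "x \<in> carrier \<Gamma>" and xs: "set xs \<subseteq> carrier \<Gamma>" by auto
  have rel: "F ((g \<otimes>\<^bsub>\<Gamma>\<^esub> x) # map (\<lambda>z. g \<otimes>\<^bsub>\<Gamma>\<^esub> z) zs) = act V g (F' (x # zs))"
    if "set zs \<subseteq> carrier \<Gamma>" for zs
    using Cons.prems(4)[of "x # zs"] that x by simp
  have "map \<phi> (map (\<lambda>z. g \<otimes>\<^bsub>\<Gamma>\<^esub> z) (x # xs)) = map (\<lambda>k. \<phi> g \<otimes>\<^bsub>K\<^esub> k) (map \<phi> (x # xs))"
    using g x xs by auto
  then have "lift_avg (\<lambda>ys. F ((g \<otimes>\<^bsub>\<Gamma>\<^esub> x) # ys)) (map \<phi> (map (\<lambda>z. g \<otimes>\<^bsub>\<Gamma>\<^esub> z) (x # xs))) =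
      act V g (lift_avg (\<lambda>ys. F' (x # ys)) (map \<phi> (x # xs)))"
    using x xs Cons.prems rel by (simp only:) (rule lift_avg_equivariant[OF g], auto)
  moreover have "homotopy (\<lambda>zs. F ((g \<otimes>\<^bsub>\<Gamma>\<^esub> x) # zs)) (map (\<lambda>z. g \<otimes>\<^bsub>\<Gamma>\<^esub> z) xs) =
      act V g (homotopy (\<lambda>zs. F' (x # zs)) xs)"
    by (rule Cons.hyps[OF xs]) (use Cons.prems rel in auto)
  ultimately show ?case
    using g Cons.prems by (simp add: act_sub del: homotopy.simps) (simp add: act_sub)
qed (simp add: g)

lemma nrm_homotopy_le:
  assumes "\<And>zs. F zs \<in> C" "\<And>zs. nrm (F zs) \<le> c" "0 \<le> c"
  shows "nrm (homotopy F xs) \<le> real (length xs) * c"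
  using assms
proof (induct xs arbitrary: F)
  case (Cons x xs)
  have "nrm (homotopy F (x # xs)) \<le>
      nrm (lift_avg (\<lambda>ys. F (x # ys)) (map \<phi> (x # xs))) + nrm (homotopy (\<lambda>zs. F (x # zs)) xs)"
    using Cons.prems by (simp add: nrm_sub_le)
  also have "\<dots> \<le> c + real (length xs) * c"
    by (intro add_mono nrm_lift_avg_le) (use Cons in auto)
  finally show ?case by (simp add: algebra_simps)
qed simp

end

context finite_kernel
begin

definition extend_zero :: "nat \<Rightarrow> ('g list \<Rightarrow> 'v) \<Rightarrow> 'g list \<Rightarrow> 'v" where
  "extend_zero n f xs = (if xs \<in> tuples \<Gamma> n then f xs else zero)"

lemma extend_zero_closed[simp]: "f \<in> Cb \<Gamma> V n \<Longrightarrow> extend_zero n f xs \<in> C"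
  and extend_zero_eq[simp]: "xs \<in> tuples \<Gamma> n \<Longrightarrow> extend_zero n f xs = f xs"
  by (simp_all add: extend_zero_def Cb_closed)

lemma extend_zero_equivariant:
  assumes "f \<in> Cb \<Gamma> V n" "g \<in> carrier \<Gamma>" "set zs \<subseteq> carrier \<Gamma>"
  shows "extend_zero n f (map (\<lambda>z. g \<otimes>\<^bsub>\<Gamma>\<^esub> z) zs) = act V g (extend_zero n f zs)"
proof -
  have "map (\<lambda>z. g \<otimes>\<^bsub>\<Gamma>\<^esub> z) zs \<in> tuples \<Gamma> n \<longleftrightarrow> zs \<in> tuples \<Gamma> n"
    using assms by (auto simp: tuples_def)
  then show ?thesis
    using assms Cb_equivariant[OF assms(1,2)] by (simp add: extend_zero_def)
qed

lemma nrm_extend_zero_le: "f \<in> Cb \<Gamma> V n \<Longrightarrow> nrm (extend_zero n f xs) \<le> supnorm \<Gamma> V n f"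
  using supnorm_upper[of f \<Gamma> V n xs] supnorm_nonneg[OF \<Gamma>.is_monoid, of f V n]
  by (simp add: extend_zero_def)

lemma cobound_extend_zero:
  "ys \<in> tuples \<Gamma> (Suc n) \<Longrightarrow> cobound V (extend_zero n f) ys = cobound V f ys"
  by (rule cobound_cong) (auto simp: tuples_def)

text \<open>The averaging map \<open>C\<^sub>b(\<Gamma>;V) \<rightarrow> C\<^sub>b(K;V\<^sup>H)\<close>, a left inverse of inflation. Cochains are
  only meaningful on \<open>tuples \<Gamma> n\<close>; \<open>extend_zero\<close> makes them total so that \<open>lift_avg\<close> applies.\<close>

definition avg_cochain :: "nat \<Rightarrow> ('g list \<Rightarrow> 'v) \<Rightarrow> 'k list \<Rightarrow> 'v" where
  "avg_cochain n f = lift_avg (extend_zero n f)"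

lemma infl_avg_cochain: "infl \<phi> (avg_cochain n f) xs = lift_avg (extend_zero n f) (map \<phi> xs)"
  by (simp add: infl_def avg_cochain_def)

lemma avg_cochain_fixed:
  assumes f: "f \<in> Cb \<Gamma> V n" and h: "h \<in> ker" and ks: "set ks \<subseteq> carrier K"
  shows "act V h (avg_cochain n f ks) = avg_cochain n f ks"
proof -
  have hc: "h \<in> carrier \<Gamma>" and "\<phi> h = \<one>\<^bsub>K\<^esub>" using h by (auto simp: kernel_def)
  then have "map (\<lambda>k. \<phi> h \<otimes>\<^bsub>K\<^esub> k) ks = ks" using ks by (induct ks) auto
  then show ?thesis
    unfolding avg_cochain_def
    using lift_avg_equivariant[OF hc ks, of "extend_zero n f" "extend_zero n f"] extend_zero_equivariant[OF f hc] f
    by simp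
qed

lemma avg_cochain_Cb:
  assumes f: "f \<in> Cb \<Gamma> V n"
  shows "avg_cochain n f \<in> Cb K VH n"
  unfolding Cb_def
proof (intro CollectI conjI ballI)
  fix ks assume "ks \<in> tuples K n"
  then show "avg_cochain n f ks \<in> vcarrier VH"
    using f avg_cochain_fixed[OF f _ tuples_carrier] by (simp add: avg_cochain_def)
next
  show "\<exists>c. \<forall>ks\<in>tuples K n. vnorm VH (avg_cochain n f ks) \<le> c"
    using f supnorm_nonneg[OF \<Gamma>.is_monoid f] nrm_extend_zero_le[OF f]
    by (intro exI[of _ "supnorm \<Gamma> V n f"]) (simp add: avg_cochain_def nrm_lift_avg_le)
next
  fix k ks assume k: "k \<in> carrier K" and ks: "ks \<in> tuples K n"
  obtain g where g: "g \<in> carrier \<Gamma>" "\<phi> g = k" using lift_exists[OF k] by blast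
  have "avg_cochain n f (map ((\<otimes>\<^bsub>K\<^esub>) k) ks) = act V g (avg_cochain n f ks)"
    unfolding avg_cochain_def
    using lift_avg_equivariant[OF g(1) tuples_carrier[OF ks], of "extend_zero n f" "extend_zero n f"]
      extend_zero_equivariant[OF f g(1)] f g(2)
    by simp
  also have "\<dots> = act VH k (avg_cochain n f ks)"
    using act_fixmod[OF g(1)] avg_cochain_fixed[OF f _ tuples_carrier[OF ks]] f g(2)
    by (simp add: avg_cochain_def)
  finally show "avg_cochain n f (map ((\<otimes>\<^bsub>K\<^esub>) k) ks) = act VH k (avg_cochain n f ks)" .
qed

lemma cobound_avg_cochain:
  assumes "f \<in> Cb \<Gamma> V n" "ks \<in> tuples K (Suc n)"
  shows "cobound VH (avg_cochain n f) ks = lift_avg (cobound V (extend_zero n f)) ks"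
  unfolding cobound_fixmod avg_cochain_def
  using assms by (simp add: lift_avg_cobound tuples_carrier)

lemma lift_avg_on_tuples_eq:
  assumes "ks \<in> tuples K n" "u \<in> C" "\<And>ys. ys \<in> tuples \<Gamma> n \<Longrightarrow> map \<phi> ys = ks \<Longrightarrow> F ys = u"
  shows "lift_avg F ks = u"
  using assms by (intro lift_avg_const) (auto simp: tuples_carrier lift_tuples)

lemma avg_cochain_Zb:
  assumes f: "f \<in> Zb \<Gamma> V n"
  shows "avg_cochain n f \<in> Zb K VH n"
  unfolding Zb_def
proof (intro CollectI conjI ballI)
  show "avg_cochain n f \<in> Cb K VH n" using Zb_Cb[OF f] by (rule avg_cochain_Cb)
  fix ks assume ks: "ks \<in> tuples K (Suc n)"
  have "lift_avg (cobound V (extend_zero n f)) ks = zero"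
    using ks by (rule lift_avg_on_tuples_eq) (simp_all add: cobound_extend_zero Zb_cobound[OF f])
  then show "cobound VH (avg_cochain n f) ks = vzero VH"
    using cobound_avg_cochain[OF Zb_Cb[OF f] ks] by simp
qed

lemma supnorm_avg_cochain_le:
  assumes f: "f \<in> Cb \<Gamma> V n"
  shows "supnorm K VH n (avg_cochain n f) \<le> supnorm \<Gamma> V n f"
  unfolding supnorm_def[of K]
proof (rule cSUP_least)
  show "tuples K n \<noteq> {}" by (rule tuples_nonempty[OF K.is_monoid])
  fix ks
  show "vnorm VH (avg_cochain n f ks) \<le> supnorm \<Gamma> V n f"
    using f nrm_extend_zero_le[OF f] supnorm_nonneg[OF \<Gamma>.is_monoid f]
    by (simp add: avg_cochain_def nrm_lift_avg_le)
qed

lemma cocycle_degree_zero_const: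
  assumes f: "f \<in> Zb \<Gamma> V 0" and x: "x \<in> carrier \<Gamma>" and y: "y \<in> carrier \<Gamma>"
  shows "f [y] = f [x]"
proof -
  have xy: "[x, y] \<in> tuples \<Gamma> (Suc 0)" and "[x] \<in> tuples \<Gamma> 0" "[y] \<in> tuples \<Gamma> 0"
    using x y by (simp_all add: tuples_def)
  then have fxy: "f [x] \<in> C" "f [y] \<in> C" using Cb_closed[OF Zb_Cb[OF f]] by auto
  have "zero = cobound V (extend_zero 0 f) [x, y]"
    using Zb_cobound[OF f xy] cobound_extend_zero[OF xy] by simp
  also have "\<dots> = sub (f [y]) (f [x])"
    using x y fxy by (simp add: cobound_def vsub_def tuples_def)
  finally show ?thesis using sub_eq_zero_iff[OF fxy(2,1)] by simp
qed

lemma cohomologous_infl_avg_cochain_0: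
  assumes f: "f \<in> Zb \<Gamma> V 0"
  shows "cohomologous \<Gamma> V 0 f (infl \<phi> (avg_cochain 0 f))"
  unfolding cohomologous_def is_cobdry_def
proof (simp, intro ballI)
  fix xs assume xs: "xs \<in> tuples \<Gamma> 0"
  then obtain x where x: "xs = [x]" "x \<in> carrier \<Gamma>" by (auto simp: tuples_def length_Suc_conv)
  have "lift_avg (extend_zero 0 f) (map \<phi> xs) = f [x]"
  proof (rule lift_avg_on_tuples_eq[OF map_hom_tuples[OF xs]])
    show "f [x] \<in> C" using Cb_closed[OF Zb_Cb[OF f] xs] x by simp
    fix ys assume "ys \<in> tuples \<Gamma> 0"
    then obtain y where "ys = [y]" "y \<in> carrier \<Gamma>" by (auto simp: tuples_def length_Suc_conv)
    then show "extend_zero 0 f ys = f [x]"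
      using cocycle_degree_zero_const[OF f x(2)] by (simp add: tuples_def)
  qed
  then show "sub (f xs) (infl \<phi> (avg_cochain 0 f) xs) = zero"
    using x Cb_closed[OF Zb_Cb[OF f] xs] by (simp add: infl_avg_cochain)
qed

lemma homotopy_Cb:
  assumes f: "f \<in> Cb \<Gamma> V (Suc m)"
  shows "(\<lambda>xs. neg (homotopy (extend_zero (Suc m) f) xs)) \<in> Cb \<Gamma> V m"
  unfolding Cb_def
proof (intro CollectI conjI ballI)
  show "neg (homotopy (extend_zero (Suc m) f) xs) \<in> C" for xs
    using f by simp
  have "nrm (neg (homotopy (extend_zero (Suc m) f) xs)) \<le> real (Suc m) * supnorm \<Gamma> V (Suc m) f"
    if "xs \<in> tuples \<Gamma> m" for xs
    using f that nrm_homotopy_le[of "extend_zero (Suc m) f" "supnorm \<Gamma> V (Suc m) f" xs]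
    by (simp add: nrm_extend_zero_le supnorm_nonneg[OF \<Gamma>.is_monoid f] length_tuples)
  then show "\<exists>c. \<forall>xs\<in>tuples \<Gamma> m. nrm (neg (homotopy (extend_zero (Suc m) f) xs)) \<le> c"
    by blast
  fix g xs assume g: "g \<in> carrier \<Gamma>" and xs: "xs \<in> tuples \<Gamma> m"
  have "homotopy (extend_zero (Suc m) f) (map (\<lambda>z. g \<otimes>\<^bsub>\<Gamma>\<^esub> z) xs) = act V g (homotopy (extend_zero (Suc m) f) xs)"
    using f by (intro homotopy_equivariant[OF g tuples_carrier[OF xs]]) (simp_all add: extend_zero_equivariant[OF f g])
  then show "neg (homotopy (extend_zero (Suc m) f) (map ((\<otimes>\<^bsub>\<Gamma>\<^esub>) g) xs)) =
      act V g (neg (homotopy (extend_zero (Suc m) f) xs))"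
    using f g by (simp add: act_scl)
qed

lemma cohomologous_infl_avg_cochain_Suc:
  assumes f: "f \<in> Zb \<Gamma> V (Suc m)"
  shows "cohomologous \<Gamma> V (Suc m) f (infl \<phi> (avg_cochain (Suc m) f))"
  unfolding cohomologous_def is_cobdry_def
proof (simp, intro bexI[OF _ homotopy_Cb[OF Zb_Cb[OF f]]] ballI)
  let ?T = "extend_zero (Suc m) f"
  have T: "\<And>zs. ?T zs \<in> C" using Zb_Cb[OF f] by simp
  fix xs assume xs: "xs \<in> tuples \<Gamma> (Suc m)"
  have "homotopy (cobound V ?T) xs = zero"
  proof (rule homotopy_eq_zero[OF tuples_carrier[OF xs]])
    show "\<And>zs. cobound V ?T zs \<in> C" using T by simp
    fix zs assume "set zs \<subseteq> carrier \<Gamma>" "length zs = Suc (length xs)"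
    then have "zs \<in> tuples \<Gamma> (Suc (Suc m))" using length_tuples[OF xs] by (simp add: tuples_def)
    then show "cobound V ?T zs = zero" by (simp add: cobound_extend_zero Zb_cobound[OF f])
  qed
  then have "cobound V (homotopy ?T) xs = sub (infl \<phi> (avg_cochain (Suc m) f) xs) (f xs)"
    using homotopy_formula[of xs ?T] tuples_carrier[OF xs] xs T by (simp add: infl_avg_cochain)
  moreover have "cobound V (\<lambda>xs. neg (homotopy ?T xs)) xs = neg (cobound V (homotopy ?T) xs)"
    using T by (intro cobound_scl) simp
  ultimately show "sub (f xs) (infl \<phi> (avg_cochain (Suc m) f) xs) =
      cobound V (\<lambda>xs. neg (homotopy ?T xs)) xs"
    using xs T Cb_closed[OF Zb_Cb[OF f] xs] by (simp add: neg_sub infl_avg_cochain)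
qed

lemma infl_surjective:
  assumes "f \<in> Zb \<Gamma> V n"
  shows "\<exists>f'\<in>Zb K VH n. cohomologous \<Gamma> V n f (infl \<phi> f')"
proof (intro bexI)
  show "cohomologous \<Gamma> V n f (infl \<phi> (avg_cochain n f))"
    using assms cohomologous_infl_avg_cochain_0 cohomologous_infl_avg_cochain_Suc by (cases n) auto
qed (rule avg_cochain_Zb[OF assms])

lemma zero_Cb: "(\<lambda>_. zero) \<in> Cb \<Gamma> V n"
  and zero_Cb_fixmod: "(\<lambda>_. zero) \<in> Cb K VH n"
proof -
  have "act VH k zero = zero" if "k \<in> carrier K" for k
    using act_fixmod[of _ zero] lift_exists[OF that] by (auto simp: kernel_def)
  then show "(\<lambda>_. zero) \<in> Cb K VH n" "(\<lambda>_. zero) \<in> Cb \<Gamma> V n"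
    by (auto simp: Cb_def kernel_def)
qed

lemma cohomologous_refl:
  assumes "f \<in> Cb K VH n"
  shows "cohomologous K VH n f f"
proof -
  have "cobound VH (\<lambda>_. zero) ks = zero" for ks
    using VK.cobound_zero[of ks] by (simp add: cobound_fixmod)
  then show ?thesis
    using Cb_closed[OF assms]
    by (cases n) (auto simp: cohomologous_def is_cobdry_def intro!: bexI[OF _ zero_Cb_fixmod])
qed

lemma cohomologous_avg_cochain_0:
  assumes f: "f \<in> Cb K VH 0" and F: "F \<in> Cb \<Gamma> V 0" and coh: "cohomologous \<Gamma> V 0 (infl \<phi> f) F"
  shows "cohomologous K VH 0 f (avg_cochain 0 F)"
  unfolding cohomologous_def is_cobdry_def
proof (simp, intro ballI)
  fix ks assume ks: "ks \<in> tuples K 0"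
  have fks: "f ks \<in> C" using Cb_closed[OF f ks] by simp
  have "avg_cochain 0 F ks = f ks"
    unfolding avg_cochain_def
  proof (rule lift_avg_on_tuples_eq[OF ks fks])
    fix ys assume ys: "ys \<in> tuples \<Gamma> 0" "map \<phi> ys = ks"
    have "sub (infl \<phi> f ys) (F ys) = zero"
      using coh ys(1) by (simp add: cohomologous_def is_cobdry_def)
    then have "sub (f ks) (F ys) = zero"
      using ys(2) by (simp add: infl_def)
    then show "extend_zero 0 F ys = f ks"
      using ys fks Cb_closed[OF F] sub_eq_zero_iff by simp
  qed
  then show "sub (f ks) (avg_cochain 0 F ks) = zero" using fks by simp
qed

lemma cohomologous_avg_cochain_Suc:
  assumes f: "f \<in> Cb K VH (Suc m)" and F: "F \<in> Cb \<Gamma> V (Suc m)"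
    and coh: "cohomologous \<Gamma> V (Suc m) (infl \<phi> f) F"
  shows "cohomologous K VH (Suc m) f (avg_cochain (Suc m) F)"
proof -
  from coh obtain b where b: "b \<in> Cb \<Gamma> V m"
    "\<forall>xs\<in>tuples \<Gamma> (Suc m). sub (infl \<phi> f xs) (F xs) = cobound V b xs"
    unfolding cohomologous_def is_cobdry_def by auto
  show ?thesis
    unfolding cohomologous_def is_cobdry_def
  proof (simp, intro bexI[OF _ avg_cochain_Cb[OF b(1)]] ballI)
    fix ks assume ks: "ks \<in> tuples K (Suc m)"
    have fks: "f ks \<in> C" using Cb_closed[OF f ks] by simp
    have "cobound VH (avg_cochain m b) ks = lift_avg (\<lambda>ys. sub (f ks) (extend_zero (Suc m) F ys)) ks"
      unfolding cobound_avg_cochain[OF b(1) ks]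
    proof (rule lift_avg_cong)
      fix ys assume "set ys \<subseteq> carrier \<Gamma>" "map \<phi> ys = ks"
      then have ys: "ys \<in> tuples \<Gamma> (Suc m)" "map \<phi> ys = ks" using ks lift_tuples by auto
      then have "sub (infl \<phi> f ys) (F ys) = cobound V b ys" using b(2) by simp
      then show "cobound V (extend_zero m b) ys = sub (f ks) (extend_zero (Suc m) F ys)"
        using ys by (simp add: cobound_extend_zero infl_def)
    qed (simp add: fks F)
    also have "\<dots> = sub (f ks) (avg_cochain (Suc m) F ks)"
      using fks F ks
      by (simp add: lift_avg_sub avg_cochain_def lift_avg_const[OF tuples_carrier[OF ks] fks])
    finally show "sub (f ks) (avg_cochain (Suc m) F ks) = cobound VH (avg_cochain m b) ks" by simp
  qed
qed

lemma cohomologous_avg_cochain: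
  "f \<in> Cb K VH n \<Longrightarrow> F \<in> Cb \<Gamma> V n \<Longrightarrow> cohomologous \<Gamma> V n (infl \<phi> f) F \<Longrightarrow>
    cohomologous K VH n f (avg_cochain n F)"
  using cohomologous_avg_cochain_0 cohomologous_avg_cochain_Suc by (cases n) auto

lemma infl_injective:
  assumes f: "f \<in> Cb K VH n" and cb: "is_cobdry \<Gamma> V n (infl \<phi> f)"
  shows "is_cobdry K VH n f"
proof -
  have "is_cobdry \<Gamma> V n (\<lambda>xs. sub (infl \<phi> f xs) zero)"
    using cb Cb_closed[OF infl_Cb[OF f]] by (subst is_cobdry_cong) simp_all
  then have "cohomologous K VH n f (avg_cochain n (\<lambda>_. zero))"
    unfolding cohomologous_def[symmetric] by (rule cohomologous_avg_cochain[OF f zero_Cb])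
  moreover have "avg_cochain n (\<lambda>_. zero) ks = zero" if "ks \<in> tuples K n" for ks
    unfolding avg_cochain_def using that by (rule lift_avg_on_tuples_eq) simp_all
  ultimately show ?thesis
    using Cb_closed[OF f] unfolding cohomologous_def by (subst (asm) is_cobdry_cong) simp_all
qed

lemma hb_norm_infl:
  assumes f: "f \<in> Cb K VH n"
  shows "hb_norm \<Gamma> V n (infl \<phi> f) = hb_norm K VH n f"
proof -
  define SK where "SK = {f' \<in> Cb K VH n. cohomologous K VH n f f'}"
  define SG where "SG = {F \<in> Cb \<Gamma> V n. cohomologous \<Gamma> V n (infl \<phi> f) F}"
  have SK: "f \<in> SK" using f cohomologous_refl[OF f] by (simp add: SK_def)
  have SG: "infl \<phi> f \<in> SG" using infl_Cb[OF f] cohomologous_infl[OF cohomologous_refl[OF f]] by (simp add: SG_def)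
  have bdd_K: "bdd_below (supnorm K VH n ` SK)"
    by (rule bdd_belowI[of _ 0]) (auto simp: SK_def intro!: supnorm_nonneg[OF K.is_monoid])
  have bdd_G: "bdd_below (supnorm \<Gamma> V n ` SG)"
    by (rule bdd_belowI[of _ 0]) (auto simp: SG_def intro!: supnorm_nonneg[OF \<Gamma>.is_monoid])
  have "(INF F\<in>SG. supnorm \<Gamma> V n F) \<le> (INF f'\<in>SK. supnorm K VH n f')"
  proof (rule cINF_greatest)
    fix f' assume "f' \<in> SK"
    then have "infl \<phi> f' \<in> SG"
      using infl_Cb cohomologous_infl by (simp add: SK_def SG_def)
    then show "(INF F\<in>SG. supnorm \<Gamma> V n F) \<le> supnorm K VH n f'"
      using cINF_lower[OF bdd_G] by (fastforce simp: supnorm_infl)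
  qed (use SK in blast)
  moreover have "(INF f'\<in>SK. supnorm K VH n f') \<le> (INF F\<in>SG. supnorm \<Gamma> V n F)"
  proof (rule cINF_greatest)
    fix F assume F: "F \<in> SG"
    then have "avg_cochain n F \<in> SK"
      using avg_cochain_Cb cohomologous_avg_cochain[OF f] by (simp add: SK_def SG_def)
    then have "(INF f'\<in>SK. supnorm K VH n f') \<le> supnorm K VH n (avg_cochain n F)"
      by (rule cINF_lower[OF bdd_K])
    also have "\<dots> \<le> supnorm \<Gamma> V n F"
      using F by (simp add: SG_def supnorm_avg_cochain_le)
    finally show "(INF f'\<in>SK. supnorm K VH n f') \<le> supnorm \<Gamma> V n F" .
  qed (use SG in blast)
  ultimately show ?thesis
    unfolding hb_norm_def SK_def[symmetric] SG_def[symmetric] by simp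
qed

theorem infl_isometric_iso: "infl_isometric_iso \<Gamma> K \<phi> V n"
  unfolding infl_isometric_iso_def infl_bij_def
  using infl_injective infl_surjective hb_norm_infl Zb_Cb by blast

end

section \<open>The module \<open>\<ell>\<^sup>1\<^sub>0(\<Gamma>)\<close> for an infinite kernel\<close>

lemma summable_on_diff:
  fixes f g :: "'a \<Rightarrow> 'b::topological_ab_group_add"
  shows "f summable_on A \<Longrightarrow> g summable_on A \<Longrightarrow> (\<lambda>x. f x - g x) summable_on A"
  using summable_on_add[of f A "\<lambda>x. - g x"] summable_on_uminus[of g A] by simp

lemma infsum_diff:
  fixes f g :: "'a \<Rightarrow> 'b::{topological_ab_group_add, t2_space}"
  shows "f summable_on A \<Longrightarrow> g summable_on A \<Longrightarrow> infsum (\<lambda>x. f x - g x) A = infsum f A - infsum g A"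
  using infsum_add[of f A "\<lambda>x. - g x"] summable_on_uminus[of g A] infsum_uminus[of g A] by simp

lemma abs_summable_on_real: "(\<lambda>x. \<bar>u x\<bar>) summable_on A \<longleftrightarrow> u summable_on A"
  for u :: "'a \<Rightarrow> real"
  using summable_on_iff_abs_summable_on_real[of u A] by (simp add: real_norm_def)

lemma abs_le_infsum_abs:
  fixes u :: "'a \<Rightarrow> real"
  assumes "u summable_on A" "x \<in> A"
  shows "\<bar>u x\<bar> \<le> infsum (\<lambda>x. \<bar>u x\<bar>) A"
  using finite_sum_le_infsum[of "\<lambda>x. \<bar>u x\<bar>" A "{x}"] assms by (simp add: abs_summable_on_real)

lemma sum_abs_le_infsum_abs:
  fixes u :: "'a \<Rightarrow> real"
  assumes "u summable_on A" "finite B" "B \<subseteq> A"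
  shows "(\<Sum>x\<in>B. \<bar>u x\<bar>) \<le> infsum (\<lambda>x. \<bar>u x\<bar>) A"
  using finite_sum_le_infsum[of "\<lambda>x. \<bar>u x\<bar>" A B] assms by (simp add: abs_summable_on_real)

lemma infsum_abs_triangle:
  fixes u w :: "'a \<Rightarrow> real"
  assumes u: "u summable_on A" and w: "w summable_on A"
  shows "infsum (\<lambda>x. \<bar>u x + w x\<bar>) A \<le> infsum (\<lambda>x. \<bar>u x\<bar>) A + infsum (\<lambda>x. \<bar>w x\<bar>) A"
proof -
  have "infsum (\<lambda>x. \<bar>u x + w x\<bar>) A \<le> infsum (\<lambda>x. \<bar>u x\<bar> + \<bar>w x\<bar>) A"
    using u w by (intro infsum_mono) (auto simp: abs_summable_on_real intro: summable_on_add)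
  also have "\<dots> = infsum (\<lambda>x. \<bar>u x\<bar>) A + infsum (\<lambda>x. \<bar>w x\<bar>) A"
    using u w by (intro infsum_add) (simp_all add: abs_summable_on_real)
  finally show ?thesis .
qed

lemma summable_on_const_infinite:
  fixes w :: "'a \<Rightarrow> real"
  assumes w: "w summable_on A" and inf: "infinite A" and c: "\<And>x. x \<in> A \<Longrightarrow> w x = c"
  shows "c = 0"
proof (rule ccontr)
  assume "c \<noteq> 0"
  then obtain n where n: "infsum (\<lambda>x. \<bar>w x\<bar>) A < of_nat n * \<bar>c\<bar>"
    using ex_less_of_nat_mult[of "\<bar>c\<bar>"] by auto
  obtain B where B: "finite B" "card B = n" "B \<subseteq> A"
    using infinite_arbitrarily_large[OF inf] by blast
  have "of_nat n * \<bar>c\<bar> = (\<Sum>x\<in>B. \<bar>w x\<bar>)" using B c by (simp add: subset_eq)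
  also have "\<dots> \<le> infsum (\<lambda>x. \<bar>w x\<bar>) A" by (rule sum_abs_le_infsum_abs[OF w B(1,3)])
  finally show False using n by simp
qed

lemma l1_Cauchy_pointwise_convergent:
  fixes u :: "nat \<Rightarrow> 'a \<Rightarrow> real"
  assumes u: "\<And>n. u n summable_on A" and x: "x \<in> A"
    and Cauchy: "\<And>e. 0 < e \<Longrightarrow> \<exists>N. \<forall>m\<ge>N. \<forall>n\<ge>N. infsum (\<lambda>x. \<bar>u m x - u n x\<bar>) A < e"
  shows "convergent (\<lambda>i. u i x)"
proof -
  have "Cauchy (\<lambda>i. u i x)"
  proof (rule CauchyI)
    fix e :: real assume "0 < e"
    then obtain N where N: "\<forall>m\<ge>N. \<forall>n\<ge>N. infsum (\<lambda>x. \<bar>u m x - u n x\<bar>) A < e"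
      using Cauchy by blast
    have "norm (u m x - u n x) < e" if "m \<ge> N" "n \<ge> N" for m n
      using abs_le_infsum_abs[OF summable_on_diff[OF u u] x, of m n] N that by fastforce
    then show "\<exists>M. \<forall>m\<ge>M. \<forall>n\<ge>M. norm (u m x - u n x) < e" by blast
  qed
  then show ?thesis by (simp add: Cauchy_convergent_iff)
qed

text \<open>Fatou's lemma for the distance to a pointwise limit.\<close>

lemma l1_dist_pointwise_limit_le:
  fixes u :: "nat \<Rightarrow> 'a \<Rightarrow> real"
  assumes u: "\<And>n. u n summable_on A" and lim: "\<forall>x\<in>A. (\<lambda>i. u i x) \<longlonglongrightarrow> L x"
    and N: "\<forall>m\<ge>N. \<forall>n\<ge>N. infsum (\<lambda>x. \<bar>u m x - u n x\<bar>) A < e" and m: "m \<ge> N"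
  shows "(\<lambda>x. \<bar>u m x - L x\<bar>) summable_on A" "infsum (\<lambda>x. \<bar>u m x - L x\<bar>) A \<le> e"
proof -
  have fin: "(\<Sum>x\<in>B. \<bar>u m x - L x\<bar>) \<le> e" if B: "finite B" "B \<subseteq> A" for B
  proof (rule LIMSEQ_le_const2)
    show "(\<lambda>n. \<Sum>x\<in>B. \<bar>u m x - u n x\<bar>) \<longlonglongrightarrow> (\<Sum>x\<in>B. \<bar>u m x - L x\<bar>)"
      using B lim by (intro tendsto_sum tendsto_rabs tendsto_diff tendsto_const) auto
    have "(\<Sum>x\<in>B. \<bar>u m x - u n x\<bar>) \<le> e" if "n \<ge> N" for n
      using sum_abs_le_infsum_abs[OF summable_on_diff[OF u u] B, of m n] N m that by fastforce
    then show "\<exists>N'. \<forall>n\<ge>N'. (\<Sum>x\<in>B. \<bar>u m x - u n x\<bar>) \<le> e" by blast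
  qed
  show "(\<lambda>x. \<bar>u m x - L x\<bar>) summable_on A"
    by (rule nonneg_bdd_above_summable_on) (use fin in \<open>auto simp: bdd_above_def\<close>)
  then show "infsum (\<lambda>x. \<bar>u m x - L x\<bar>) A \<le> e"
    by (rule infsum_le_finite_sums) (rule fin)
qed

lemma l1_Cauchy_limit:
  fixes u :: "nat \<Rightarrow> 'a \<Rightarrow> real"
  assumes u: "\<And>n. u n summable_on A"
    and Cauchy: "\<And>e. 0 < e \<Longrightarrow> \<exists>N. \<forall>m\<ge>N. \<forall>n\<ge>N. infsum (\<lambda>x. \<bar>u m x - u n x\<bar>) A < e"
  obtains L where "\<And>x. x \<notin> A \<Longrightarrow> L x = 0" "L summable_on A"
    "(\<lambda>n. infsum (\<lambda>x. \<bar>u n x - L x\<bar>) A) \<longlonglongrightarrow> 0"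
proof -
  define L where "L x = (if x \<in> A then lim (\<lambda>i. u i x) else 0)" for x
  have lim: "\<forall>x\<in>A. (\<lambda>i. u i x) \<longlonglongrightarrow> L x"
    using l1_Cauchy_pointwise_convergent[OF u _ Cauchy] by (simp add: L_def convergent_LIMSEQ_iff)
  note approx = l1_dist_pointwise_limit_le[OF u lim]
  obtain N1 where "\<forall>m\<ge>N1. \<forall>n\<ge>N1. infsum (\<lambda>x. \<bar>u m x - u n x\<bar>) A < 1"
    using Cauchy[of 1] by auto
  then have "(\<lambda>x. u N1 x - L x) summable_on A"
    using approx(1)[of N1 1 N1] abs_summable_on_real[of "\<lambda>x. u N1 x - L x" A] by simp
  then have "(\<lambda>x. u N1 x - (u N1 x - L x)) summable_on A"
    by (rule summable_on_diff[OF u])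
  then have "L summable_on A" by simp
  moreover have "(\<lambda>n. infsum (\<lambda>x. \<bar>u n x - L x\<bar>) A) \<longlonglongrightarrow> 0"
  proof (rule LIMSEQ_I)
    fix r :: real assume "0 < r"
    then obtain N where N: "\<forall>m\<ge>N. \<forall>n\<ge>N. infsum (\<lambda>x. \<bar>u m x - u n x\<bar>) A < r / 2"
      using Cauchy[of "r / 2"] by auto
    have "norm (infsum (\<lambda>x. \<bar>u n x - L x\<bar>) A - 0) < r" if "n \<ge> N" for n
    proof -
      have "0 \<le> infsum (\<lambda>x. \<bar>u n x - L x\<bar>) A" by (rule infsum_nonneg) simp
      with approx(2)[OF N that] \<open>0 < r\<close> show ?thesis by simp
    qed
    then show "\<exists>N. \<forall>n\<ge>N. norm (infsum (\<lambda>x. \<bar>u n x - L x\<bar>) A - 0) < r" by blast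
  qed
  moreover have "L x = 0" if "x \<notin> A" for x using that by (simp add: L_def)
  ultimately show ?thesis using that by blast
qed

lemma infsum_l1_limit:
  fixes u :: "nat \<Rightarrow> 'a \<Rightarrow> real"
  assumes u: "\<And>n. u n summable_on A" and L: "L summable_on A"
    and lim: "(\<lambda>n. infsum (\<lambda>x. \<bar>u n x - L x\<bar>) A) \<longlonglongrightarrow> 0"
  shows "(\<lambda>n. infsum (u n) A) \<longlonglongrightarrow> infsum L A"
proof -
  define d where "d n = infsum (\<lambda>x. \<bar>u n x - L x\<bar>) A" for n
  have bound: "\<bar>infsum (u n) A - infsum L A\<bar> \<le> d n" for n
  proof -
    have "infsum (u n) A - infsum L A = infsum (\<lambda>x. u n x - L x) A"
      using infsum_diff[OF u L] by simp
    moreover have "(\<lambda>x. \<bar>u n x - L x\<bar>) summable_on A"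
      using summable_on_diff[OF u L] by (simp add: abs_summable_on_real)
    ultimately show ?thesis
      using norm_infsum_bound[of "\<lambda>x. u n x - L x" A] by (simp add: d_def)
  qed
  have lower: "- d n \<le> infsum (u n) A - infsum L A" and upper: "infsum (u n) A - infsum L A \<le> d n" for n
    using bound[of n] unfolding abs_le_iff by linarith+
  have lim_d: "d \<longlonglongrightarrow> 0" using lim by (simp add: d_def[abs_def])
  have "(\<lambda>n. - d n) \<longlonglongrightarrow> - 0" by (rule tendsto_minus[OF lim_d])
  then have lim_md: "(\<lambda>n. - d n) \<longlonglongrightarrow> 0" by simp
  have "(\<lambda>n. infsum (u n) A - infsum L A) \<longlonglongrightarrow> 0"
    by (rule tendsto_sandwich[OF _ _ lim_md lim_d]) (simp_all add: lower upper)
  then have "(\<lambda>n. infsum (u n) A - infsum L A + infsum L A) \<longlonglongrightarrow> 0 + infsum L A"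
    by (rule tendsto_add) (rule tendsto_const)
  then show ?thesis by simp
qed

definition l1_zero :: "('g, 'b) monoid_scheme \<Rightarrow> ('g \<Rightarrow> real) set" where
  "l1_zero G = {u. (\<forall>x. x \<notin> carrier G \<longrightarrow> u x = 0) \<and> u summable_on carrier G \<and> infsum u (carrier G) = 0}"

lemma l1_zeroD:
  assumes "u \<in> l1_zero G"
  shows "x \<notin> carrier G \<Longrightarrow> u x = 0" "u summable_on carrier G" "infsum u (carrier G) = 0"
  using assms by (simp_all add: l1_zero_def)

lemma l1_zero_zero: "(\<lambda>_. 0) \<in> l1_zero G"
  and l1_zero_add: "u \<in> l1_zero G \<Longrightarrow> w \<in> l1_zero G \<Longrightarrow> (\<lambda>x. u x + w x) \<in> l1_zero G"
  and l1_zero_scale: "u \<in> l1_zero G \<Longrightarrow> (\<lambda>x. a * u x) \<in> l1_zero G"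
  unfolding l1_zero_def by (auto simp: summable_on_add infsum_add summable_on_cmult_right infsum_cmult_right')

text \<open>The theorem fixes the carrier type of the test module to \<open>('g \<Rightarrow> real) set set\<close>;
  a function \<open>u\<close> is stored as \<open>{{u}}\<close>.\<close>

definition enc :: "('g \<Rightarrow> real) \<Rightarrow> ('g \<Rightarrow> real) set set" where
  "enc u = {{u}}"

definition dec :: "('g \<Rightarrow> real) set set \<Rightarrow> 'g \<Rightarrow> real" where
  "dec X = the_elem (the_elem X)"

lemma dec_enc[simp]: "dec (enc u) = u"
  and enc_eq_iff[simp]: "enc u = enc w \<longleftrightarrow> u = w"
  by (simp_all add: enc_def dec_def)

definition transl :: "('g, 'b) monoid_scheme \<Rightarrow> 'g \<Rightarrow> ('g \<Rightarrow> real) \<Rightarrow> 'g \<Rightarrow> real" where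
  "transl G g u = (\<lambda>x. if x \<in> carrier G then u (inv\<^bsub>G\<^esub> g \<otimes>\<^bsub>G\<^esub> x) else 0)"

definition l1_zero_mod :: "('g, 'b) monoid_scheme \<Rightarrow> ('g, ('g \<Rightarrow> real) set set) gmod" where
  "l1_zero_mod G = \<lparr>vcarrier = enc ` l1_zero G, vzero = enc (\<lambda>_. 0),
     vadd = (\<lambda>X Y. enc (\<lambda>x. dec X x + dec Y x)),
     vscale = (\<lambda>a X. enc (\<lambda>x. a * dec X x)),
     vnorm = (\<lambda>X. infsum (\<lambda>x. \<bar>dec X x\<bar>) (carrier G)),
     act = (\<lambda>g X. enc (transl G g (dec X)))\<rparr>"

lemma l1_zero_mod_simps[simp]:
  "vcarrier (l1_zero_mod G) = enc ` l1_zero G" "vzero (l1_zero_mod G) = enc (\<lambda>_. 0)"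
  "vadd (l1_zero_mod G) X Y = enc (\<lambda>x. dec X x + dec Y x)"
  "vscale (l1_zero_mod G) a X = enc (\<lambda>x. a * dec X x)"
  "vnorm (l1_zero_mod G) X = infsum (\<lambda>x. \<bar>dec X x\<bar>) (carrier G)"
  "act (l1_zero_mod G) g X = enc (transl G g (dec X))"
  by (simp_all add: l1_zero_mod_def)

lemma vsub_l1_zero_mod[simp]: "vsub (l1_zero_mod G) X Y = enc (\<lambda>x. dec X x - dec Y x)"
  by (simp add: vsub_def)

lemma l1_zero_eq_zero_iff:
  assumes "u \<in> l1_zero G"
  shows "infsum (\<lambda>x. \<bar>u x\<bar>) (carrier G) = 0 \<longleftrightarrow> u = (\<lambda>_. 0)"
proof
  assume z: "infsum (\<lambda>x. \<bar>u x\<bar>) (carrier G) = 0"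
  show "u = (\<lambda>_. 0)"
  proof
    fix x
    show "u x = 0"
      using abs_le_infsum_abs[OF l1_zeroD(2)[OF assms], of x] z l1_zeroD(1)[OF assms, of x]
      by (cases "x \<in> carrier G") auto
  qed
qed simp

lemma l1_zero_mod_normed_space: "normed_space (l1_zero_mod G)"
  unfolding normed_space_def l1_zero_mod_simps
proof (intro conjI ballI allI)
  fix X Y a
  assume "X \<in> enc ` l1_zero G" "Y \<in> enc ` l1_zero G"
  then obtain u w where u: "u \<in> l1_zero G" "X = enc u" and w: "w \<in> l1_zero G" "Y = enc w"
    by blast
  show "enc (\<lambda>x. dec X x + dec Y x) \<in> enc ` l1_zero G" using u w l1_zero_add by auto
  show "infsum (\<lambda>x. \<bar>dec (enc (\<lambda>x. dec X x + dec Y x)) x\<bar>) (carrier G)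
      \<le> infsum (\<lambda>x. \<bar>dec X x\<bar>) (carrier G) + infsum (\<lambda>x. \<bar>dec Y x\<bar>) (carrier G)"
    using infsum_abs_triangle[OF l1_zeroD(2)[OF u(1)] l1_zeroD(2)[OF w(1)]] u w by simp
next
  fix X a assume "X \<in> enc ` l1_zero G"
  then obtain u where u: "u \<in> l1_zero G" "X = enc u" by blast
  show "enc (\<lambda>x. a * dec X x) \<in> enc ` l1_zero G" using u l1_zero_scale by auto
  show "(infsum (\<lambda>x. \<bar>dec X x\<bar>) (carrier G) = 0) = (X = enc (\<lambda>_. 0))"
    using u l1_zero_eq_zero_iff[OF u(1)] by auto
  show "infsum (\<lambda>x. \<bar>dec (enc (\<lambda>x. a * dec X x)) x\<bar>) (carrier G) = \<bar>a\<bar> * infsum (\<lambda>x. \<bar>dec X x\<bar>) (carrier G)"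
    by (simp add: abs_mult infsum_cmult_right')
qed (auto simp: l1_zero_zero algebra_simps infsum_nonneg)

lemma l1_zero_mod_complete:
  fixes G :: "('g, 'b) monoid_scheme"
  shows "complete_vs (l1_zero_mod G)"
  unfolding complete_vs_def
proof (intro allI impI)
  fix X :: "nat \<Rightarrow> ('g \<Rightarrow> real) set set"
  assume hyp: "(\<forall>i. X i \<in> vcarrier (l1_zero_mod G)) \<and>
    (\<forall>e>0. \<exists>N. \<forall>m\<ge>N. \<forall>n\<ge>N. vnorm (l1_zero_mod G) (vsub (l1_zero_mod G) (X m) (X n)) < e)"
  then have X: "\<And>i. X i \<in> enc ` l1_zero G"
    by simp
  have Cauchy: "\<exists>N. \<forall>m\<ge>N. \<forall>n\<ge>N. infsum (\<lambda>x. \<bar>dec (X m) x - dec (X n) x\<bar>) (carrier G) < e"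
    if "0 < e" for e
    using hyp that by simp
  have u: "dec (X i) \<in> l1_zero G" "X i = enc (dec (X i))" for i
  proof -
    obtain w where "w \<in> l1_zero G" "X i = enc w" using X[of i] by blast
    then show "dec (X i) \<in> l1_zero G" "X i = enc (dec (X i))" by simp_all
  qed
  obtain L where L: "\<And>x. x \<notin> carrier G \<Longrightarrow> L x = 0" "L summable_on carrier G"
    and lim: "(\<lambda>n. infsum (\<lambda>x. \<bar>dec (X n) x - L x\<bar>) (carrier G)) \<longlonglongrightarrow> 0"
    using l1_Cauchy_limit[of "\<lambda>i. dec (X i)" "carrier G", OF l1_zeroD(2)[OF u(1)] Cauchy] by blast
  have "(\<lambda>n. infsum (dec (X n)) (carrier G)) \<longlonglongrightarrow> infsum L (carrier G)"
    using infsum_l1_limit[of "\<lambda>n. dec (X n)", OF l1_zeroD(2)[OF u(1)] L(2) lim] .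
  then have "infsum L (carrier G) = 0"
    using LIMSEQ_unique[OF _ tendsto_const] l1_zeroD(3)[OF u(1)] by simp
  then have "enc L \<in> vcarrier (l1_zero_mod G)"
    using L by (auto simp: l1_zero_def)
  moreover have "(\<lambda>i. vnorm (l1_zero_mod G) (vsub (l1_zero_mod G) (X i) (enc L))) \<longlonglongrightarrow> 0"
    using lim by simp
  ultimately show "\<exists>L\<in>vcarrier (l1_zero_mod G). (\<lambda>i. vnorm (l1_zero_mod G) (vsub (l1_zero_mod G) (X i) L)) \<longlonglongrightarrow> 0"
    by blast
qed

context group
begin

lemma infsum_transl:
  assumes "g \<in> carrier G"
  shows "infsum (\<lambda>x. f (transl G g u x)) (carrier G) = infsum (\<lambda>x. f (u x)) (carrier G)"
    and "(\<lambda>x. f (transl G g u x)) summable_on (carrier G) \<longleftrightarrow> (\<lambda>x. f (u x)) summable_on (carrier G)"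
proof -
  have bij: "bij_betw (\<lambda>x. inv g \<otimes> x) (carrier G) (carrier G)"
    using assms by (intro bij_betwI[where g="\<lambda>x. g \<otimes> x"]) (auto simp: m_assoc[symmetric])
  have "infsum (\<lambda>x. f (transl G g u x)) (carrier G) = infsum (\<lambda>x. f (u (inv g \<otimes> x))) (carrier G)"
    by (rule infsum_cong) (simp add: transl_def)
  also have "\<dots> = infsum (\<lambda>x. f (u x)) (carrier G)"
    using infsum_reindex_bij_betw[OF bij, of "\<lambda>x. f (u x)"] by simp
  finally show "infsum (\<lambda>x. f (transl G g u x)) (carrier G) = infsum (\<lambda>x. f (u x)) (carrier G)" .
  have "(\<lambda>x. f (transl G g u x)) summable_on (carrier G) \<longleftrightarrow> (\<lambda>x. f (u (inv g \<otimes> x))) summable_on (carrier G)"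
    by (rule summable_on_cong) (simp add: transl_def)
  also have "\<dots> \<longleftrightarrow> (\<lambda>x. f (u x)) summable_on (carrier G)"
    using summable_on_reindex_bij_betw[OF bij, of "\<lambda>x. f (u x)"] by simp
  finally show "(\<lambda>x. f (transl G g u x)) summable_on (carrier G) \<longleftrightarrow> (\<lambda>x. f (u x)) summable_on (carrier G)" .
qed

lemma l1_zero_transl: "g \<in> carrier G \<Longrightarrow> u \<in> l1_zero G \<Longrightarrow> transl G g u \<in> l1_zero G"
  using infsum_transl[of g "\<lambda>x. x" u] by (simp add: l1_zero_def transl_def)

lemma l1_zero_mod_normed_gmod: "normed_gmod G (l1_zero_mod G)"
  unfolding normed_gmod_def
proof (intro conjI ballI allI l1_zero_mod_normed_space)
  fix g X assume g: "g \<in> carrier G" and "X \<in> vcarrier (l1_zero_mod G)"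
  then obtain u where u: "u \<in> l1_zero G" "X = enc u" by auto
  show "act (l1_zero_mod G) g X \<in> vcarrier (l1_zero_mod G)"
    using l1_zero_transl[OF g u(1)] u by simp
  show "vnorm (l1_zero_mod G) (act (l1_zero_mod G) g X) = vnorm (l1_zero_mod G) X"
    using infsum_transl(1)[OF g, of abs u] u by simp
next
  fix X assume "X \<in> vcarrier (l1_zero_mod G)"
  then obtain u where u: "u \<in> l1_zero G" "X = enc u" by auto
  then show "act (l1_zero_mod G) \<one> X = X"
    using l1_zeroD(1)[OF u(1)] by (auto simp: transl_def fun_eq_iff)
next
  fix g h X assume "g \<in> carrier G" "h \<in> carrier G"
  then have "inv (g \<otimes> h) \<otimes> x = inv h \<otimes> (inv g \<otimes> x)" if "x \<in> carrier G" for x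
    using that by (simp add: inv_mult_group m_assoc)
  then show "act (l1_zero_mod G) (g \<otimes> h) X = act (l1_zero_mod G) g (act (l1_zero_mod G) h X)"
    using \<open>g \<in> carrier G\<close> \<open>h \<in> carrier G\<close> by (auto simp: transl_def fun_eq_iff)
qed (auto simp: transl_def fun_eq_iff algebra_simps)

lemma l1_zero_mod_banach_gmod: "banach_gmod G (l1_zero_mod G)"
  by (simp add: banach_gmod_def l1_zero_mod_normed_gmod l1_zero_mod_complete)

text \<open>A fixed \<open>u\<close> is constant on the infinite set \<open>{h\<inverse> z | h \<in> H}\<close>, so summability forces
  \<open>u z = 0\<close>.\<close>

lemma l1_zero_fixed_eq_zero:
  assumes H: "H \<subseteq> carrier G" "infinite H" and u: "u \<in> l1_zero G"
    and fixed: "\<And>h. h \<in> H \<Longrightarrow> transl G h u = u"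
  shows "u = (\<lambda>_. 0)"
proof
  fix z
  show "u z = 0"
  proof (cases "z \<in> carrier G")
    case True
    define A where "A = (\<lambda>h. inv h \<otimes> z) ` H"
    have "inj_on (\<lambda>h. inv h \<otimes> z) H"
      using H(1) True by (intro inj_onI) (metis inv_inv r_cancel_one' inv_closed subsetD m_closed
          inv_solve_right)
    then have "infinite A" using H(2) by (simp add: A_def finite_image_iff)
    moreover have "A \<subseteq> carrier G" using H(1) True by (auto simp: A_def)
    moreover have "u a = u z" if a: "a \<in> A" for a
    proof -
      obtain h where "h \<in> H" "a = inv h \<otimes> z" using a by (auto simp: A_def)
      then show ?thesis
        using fun_cong[OF fixed[of h], of z] True by (simp add: transl_def)
    qed
    ultimately show ?thesis
      using summable_on_const_infinite summable_on_subset_banach[OF l1_zeroD(2)[OF u]] by metis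
  next
    case False
    then show ?thesis using l1_zeroD(1)[OF u] by simp
  qed
qed

end

definition dirac :: "'g \<Rightarrow> 'g \<Rightarrow> real" where
  "dirac a z = (if z = a then 1 else 0)"

lemma dirac_summable_on: "dirac a summable_on A"
proof -
  have "dirac a summable_on A \<longleftrightarrow> dirac a summable_on (A \<inter> {a})"
    by (rule summable_on_cong_neutral) (auto simp: dirac_def)
  then show ?thesis by simp
qed

lemma infsum_dirac:
  assumes "a \<in> A"
  shows "infsum (dirac a) A = 1"
proof -
  have "infsum (dirac a) A = infsum (dirac a) {a}"
    using assms by (intro infsum_cong_neutral) (auto simp: dirac_def)
  then show ?thesis by (simp add: dirac_def)
qed

definition dirac_cocycle :: "('g, 'b) monoid_scheme \<Rightarrow> 'g list \<Rightarrow> ('g \<Rightarrow> real) set set" where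
  "dirac_cocycle G xs = enc (\<lambda>z. dirac (xs ! 1) z - dirac (xs ! 0) z)"

context group
begin

lemma dirac_diff_l1_zero:
  assumes "a \<in> carrier G" "b \<in> carrier G"
  shows "(\<lambda>z. dirac a z - dirac b z) \<in> l1_zero G"
  unfolding l1_zero_def
proof (intro CollectI conjI allI impI)
  show "dirac a z - dirac b z = 0" if "z \<notin> carrier G" for z
    using that assms by (auto simp: dirac_def)
  have "infsum (\<lambda>z. dirac a z - dirac b z) (carrier G) = infsum (dirac a) (carrier G) - infsum (dirac b) (carrier G)"
    by (intro infsum_diff dirac_summable_on)
  then show "infsum (\<lambda>z. dirac a z - dirac b z) (carrier G) = 0"
    using assms by (simp add: infsum_dirac)
qed (intro summable_on_diff dirac_summable_on)

lemma norm_dirac_diff_le: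
  assumes "a \<in> carrier G" "b \<in> carrier G"
  shows "infsum (\<lambda>z. \<bar>dirac a z - dirac b z\<bar>) (carrier G) \<le> 2"
proof -
  have "infsum (\<lambda>z. \<bar>dirac a z - dirac b z\<bar>) (carrier G) \<le> infsum (\<lambda>z. dirac a z + dirac b z) (carrier G)"
  proof (rule infsum_mono)
    show "(\<lambda>z. \<bar>dirac a z - dirac b z\<bar>) summable_on carrier G"
      unfolding abs_summable_on_real by (intro summable_on_diff dirac_summable_on)
    show "(\<lambda>z. dirac a z + dirac b z) summable_on carrier G"
      by (intro summable_on_add dirac_summable_on)
    show "\<bar>dirac a z - dirac b z\<bar> \<le> dirac a z + dirac b z" for z
      by (simp add: dirac_def)
  qed
  also have "\<dots> = infsum (dirac a) (carrier G) + infsum (dirac b) (carrier G)"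
    by (intro infsum_add dirac_summable_on)
  also have "\<dots> = 2"
    using assms by (simp add: infsum_dirac)
  finally show ?thesis .
qed

lemma transl_dirac_diff:
  assumes "g \<in> carrier G" "a \<in> carrier G" "b \<in> carrier G"
  shows "transl G g (\<lambda>z. dirac a z - dirac b z) = (\<lambda>z. dirac (g \<otimes> a) z - dirac (g \<otimes> b) z)"
proof
  fix z
  have "z \<in> carrier G \<Longrightarrow> inv g \<otimes> z = c \<longleftrightarrow> z = g \<otimes> c" if "c \<in> carrier G" for c
    using that assms(1) inv_solve_left' by blast
  moreover have "z \<notin> carrier G \<Longrightarrow> z \<noteq> g \<otimes> a \<and> z \<noteq> g \<otimes> b" using assms by auto
  ultimately show "transl G g (\<lambda>z. dirac a z - dirac b z) z = dirac (g \<otimes> a) z - dirac (g \<otimes> b) z"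
    using assms by (auto simp: transl_def dirac_def)
qed

lemma dirac_cocycle_Zb: "dirac_cocycle G \<in> Zb G (l1_zero_mod G) 1"
  unfolding Zb_def Cb_def
proof (intro CollectI conjI ballI exI)
  fix xs assume "xs \<in> tuples G 1"
  then obtain a b where ab: "xs = [a, b]" "a \<in> carrier G" "b \<in> carrier G"
    by (auto simp: tuples_def length_Suc_conv)
  then show "dirac_cocycle G xs \<in> vcarrier (l1_zero_mod G)"
    using dirac_diff_l1_zero by (simp add: dirac_cocycle_def)
  show "vnorm (l1_zero_mod G) (dirac_cocycle G xs) \<le> 2"
    using ab by (simp add: dirac_cocycle_def norm_dirac_diff_le)
  fix g assume "g \<in> carrier G"
  then show "dirac_cocycle G (map ((\<otimes>) g) xs) = act (l1_zero_mod G) g (dirac_cocycle G xs)"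
    using ab by (simp add: dirac_cocycle_def transl_dirac_diff)
next
  fix xs assume "xs \<in> tuples G (Suc 1)"
  then obtain a b c where "xs = [a, b, c]"
    by (auto simp: tuples_def length_Suc_conv numeral_2_eq_2)
  moreover have "[0..<3] = [0, 1, 2::nat]" by (simp add: upt_rec)
  ultimately show "cobound (l1_zero_mod G) (dirac_cocycle G) xs = vzero (l1_zero_mod G)"
    by (simp add: cobound_def dirac_cocycle_def fun_eq_iff)
qed

text \<open>Were \<open>\<delta>\<^sub>x - \<delta>\<^sub>1 = x v - v\<close> for all \<open>x\<close>, then \<open>\<delta>\<^sub>1 - v\<close> would be constant, hence zero
  on the infinite group, contradicting \<open>\<Sum> v = 0\<close>.\<close>

lemma dirac_diff_not_coboundary:
  assumes inf: "infinite (carrier G)" and v: "v \<in> l1_zero G"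
  shows "\<exists>x\<in>carrier G. (\<lambda>z. dirac x z - dirac \<one> z) \<noteq> (\<lambda>z. transl G x v z - v z)"
proof (rule ccontr)
  assume "\<not> ?thesis"
  then have eq: "dirac x x - dirac \<one> x = v \<one> - v x" if "x \<in> carrier G" for x
    using fun_cong[of _ _ x] that by (fastforce simp: transl_def)
  define w where "w z = dirac \<one> z - v z" for z
  have "w summable_on carrier G"
    unfolding w_def using l1_zeroD(2)[OF v] by (intro summable_on_diff dirac_summable_on)
  moreover have "w x = 1 - v \<one>" if "x \<in> carrier G" for x
    using eq[OF that] by (simp add: w_def dirac_def)
  ultimately have "1 - v \<one> = 0"
    using summable_on_const_infinite[OF _ inf] by blast
  then have "v x = dirac \<one> x" if "x \<in> carrier G" for x
    using eq[OF that] by (simp add: dirac_def)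
  then have "infsum v (carrier G) = infsum (dirac \<one>) (carrier G)"
    by (rule infsum_cong)
  then show False
    using l1_zeroD(3)[OF v] by (simp add: infsum_dirac)
qed

lemma dirac_cocycle_not_cobdry:
  assumes inf: "infinite (carrier G)"
  shows "\<not> is_cobdry G (l1_zero_mod G) 1 (dirac_cocycle G)"
proof
  assume "is_cobdry G (l1_zero_mod G) 1 (dirac_cocycle G)"
  then obtain b where b: "b \<in> Cb G (l1_zero_mod G) 0"
    and eq: "\<And>xs. xs \<in> tuples G 1 \<Longrightarrow> dirac_cocycle G xs = cobound (l1_zero_mod G) b xs"
    by (auto simp: is_cobdry_def)
  have one: "[\<one>] \<in> tuples G 0" by (simp add: tuples_def)
  define v where "v = dec (b [\<one>])"
  obtain w where "w \<in> l1_zero G" "b [\<one>] = enc w" using Cb_closed[OF b one] by auto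
  then have v: "v \<in> l1_zero G" and b1: "b [\<one>] = enc v" by (simp_all add: v_def)
  have bx: "b [x] = enc (transl G x v)" if x: "x \<in> carrier G" for x
    using Cb_equivariant[OF b x one] x b1 by simp
  have "(\<lambda>z. dirac x z - dirac \<one> z) = (\<lambda>z. transl G x v z - v z)" if x: "x \<in> carrier G" for x
  proof -
    have "[\<one>, x] \<in> tuples G 1" using x by (simp add: tuples_def)
    then have "dirac_cocycle G [\<one>, x] = cobound (l1_zero_mod G) b [\<one>, x]" by (rule eq)
    also have "\<dots> = enc (\<lambda>z. transl G x v z - v z)"
      using bx[OF x] b1 by (simp add: cobound_def upt_rec)
    finally show ?thesis by (simp add: dirac_cocycle_def)
  qed
  then show False
    using dirac_diff_not_coboundary[OF inf v] by blast
qed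

end

lemma not_infl_bij_l1_zero_mod:
  assumes \<Gamma>: "group \<Gamma>" and hom: "\<phi> \<in> hom \<Gamma> K" and inf: "infinite (kernel \<Gamma> K \<phi>)"
  shows "\<not> infl_bij \<Gamma> K \<phi> (l1_zero_mod \<Gamma>) 1"
proof
  interpret group \<Gamma> by (rule \<Gamma>)
  let ?W = "fixmod \<Gamma> K \<phi> (l1_zero_mod \<Gamma>)"
  have ker: "kernel \<Gamma> K \<phi> \<subseteq> carrier \<Gamma>" by (auto simp: kernel_def)
  assume "infl_bij \<Gamma> K \<phi> (l1_zero_mod \<Gamma>) 1"
  then obtain f where f: "f \<in> Zb K ?W 1"
    and coh: "cohomologous \<Gamma> (l1_zero_mod \<Gamma>) 1 (dirac_cocycle \<Gamma>) (infl \<phi> f)"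
    using dirac_cocycle_Zb unfolding infl_bij_def by blast
  have "f ks = enc (\<lambda>_. 0)" if "ks \<in> tuples K 1" for ks
  proof -
    have "f ks \<in> vcarrier ?W" using f that by (simp add: Zb_def Cb_def)
    then obtain u where "u \<in> l1_zero \<Gamma>" "f ks = enc u" "\<And>h. h \<in> kernel \<Gamma> K \<phi> \<Longrightarrow> transl \<Gamma> h u = u"
      by (auto simp: fixmod_def)
    then show ?thesis using l1_zero_fixed_eq_zero[OF ker inf] by simp
  qed
  moreover have "map \<phi> xs \<in> tuples K 1" if "xs \<in> tuples \<Gamma> 1" for xs
    using that hom_in_carrier[OF hom] by (auto simp: tuples_def)
  ultimately have "vsub (l1_zero_mod \<Gamma>) (dirac_cocycle \<Gamma> xs) (infl \<phi> f xs) = dirac_cocycle \<Gamma> xs"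
    if "xs \<in> tuples \<Gamma> 1" for xs
    using that by (simp add: infl_def dirac_cocycle_def)
  then have "is_cobdry \<Gamma> (l1_zero_mod \<Gamma>) 1 (dirac_cocycle \<Gamma>)"
    using coh unfolding cohomologous_def by (subst (asm) is_cobdry_cong) simp_all
  then show False
    using dirac_cocycle_not_cobdry inf ker finite_subset by blast
qed

lemma infl_isometric_iso_if_finite_kernel:
  fixes \<Gamma> :: "'g monoid" and K :: "'k monoid"
  assumes "group \<Gamma>" "group K" "\<phi> \<in> hom \<Gamma> K" "\<phi> ` carrier \<Gamma> = carrier K"
    and "normed_gmod \<Gamma> V" "finite (kernel \<Gamma> K \<phi>)"
  shows "infl_isometric_iso \<Gamma> K \<phi> V n"
proof -
  interpret finite_kernel V \<Gamma> K \<phi>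
    using assms unfolding finite_kernel_def finite_kernel_axioms_def inflation_setup_def
      inflation_setup_axioms_def normed_vs_def normed_gmod_def by blast
  show ?thesis by (rule infl_isometric_iso)
qed

theorem theoremB:
  fixes \<Gamma> :: "'g monoid" and K :: "'k monoid" and \<phi> :: "'g \<Rightarrow> 'k"
  assumes "group \<Gamma>" and "group K" and "\<phi> \<in> hom \<Gamma> K" and "\<phi> ` carrier \<Gamma> = carrier K"
  shows
    "(finite (kernel \<Gamma> K \<phi>) \<longrightarrow>
        (\<forall>V :: ('g, 'v) gmod. normed_gmod \<Gamma> V \<longrightarrow> (\<forall>n. infl_isometric_iso \<Gamma> K \<phi> V n))) \<and>
     (finite (kernel \<Gamma> K \<phi>) \<longrightarrow>
        (\<forall>V :: ('g, 'w) gmod. banach_gmod \<Gamma> V \<longrightarrow> infl_bij \<Gamma> K \<phi> V 1)) \<and>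
     ((\<forall>V :: ('g, ('g \<Rightarrow> real) set set) gmod. normed_gmod \<Gamma> V \<longrightarrow> (\<forall>n. infl_isometric_iso \<Gamma> K \<phi> V n))
        \<longrightarrow> finite (kernel \<Gamma> K \<phi>)) \<and>
     ((\<forall>V :: ('g, ('g \<Rightarrow> real) set set) gmod. banach_gmod \<Gamma> V \<longrightarrow> infl_bij \<Gamma> K \<phi> V 1)
        \<longrightarrow> finite (kernel \<Gamma> K \<phi>))"
proof (intro conjI impI allI)
  fix V :: "('g, 'v) gmod" and n
  assume "finite (kernel \<Gamma> K \<phi>)" "normed_gmod \<Gamma> V"
  then show "infl_isometric_iso \<Gamma> K \<phi> V n"
    using infl_isometric_iso_if_finite_kernel assms by blast
next
  fix V :: "('g, 'w) gmod"
  assume "finite (kernel \<Gamma> K \<phi>)" "banach_gmod \<Gamma> V"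
  then show "infl_bij \<Gamma> K \<phi> V 1"
    using infl_isometric_iso_if_finite_kernel[of \<Gamma> K \<phi> V 1] assms
    by (simp add: banach_gmod_def infl_isometric_iso_def)
next
  have l1: "banach_gmod \<Gamma> (l1_zero_mod \<Gamma>)" "normed_gmod \<Gamma> (l1_zero_mod \<Gamma>)"
    using group.l1_zero_mod_banach_gmod[OF assms(1)] by (simp_all add: banach_gmod_def)
  have "infinite (kernel \<Gamma> K \<phi>) \<Longrightarrow> \<not> infl_bij \<Gamma> K \<phi> (l1_zero_mod \<Gamma>) 1"
    using not_infl_bij_l1_zero_mod assms(1,3) by blast
  then show "(\<forall>V :: ('g, ('g \<Rightarrow> real) set set) gmod. normed_gmod \<Gamma> V \<longrightarrow> (\<forall>n. infl_isometric_iso \<Gamma> K \<phi> V n))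
        \<Longrightarrow> finite (kernel \<Gamma> K \<phi>)"
    and "(\<forall>V :: ('g, ('g \<Rightarrow> real) set set) gmod. banach_gmod \<Gamma> V \<longrightarrow> infl_bij \<Gamma> K \<phi> V 1)
        \<Longrightarrow> finite (kernel \<Gamma> K \<phi>)"
    using l1 by (auto simp: infl_isometric_iso_def)
qed

end
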